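(* Let $w\in W$ and $n_1,\ldots,n_r\in\mathbb Z_{\ge0}$ with $\sum n_j=\ell(w)$. There exists a labeled sorting process of $w$ whose labels have multiplicities $n_1,\ldots,n_r$ (i.e. $\alpha_j$ occurs exactly $n_j$ times as a label) if and only if $|R_I(w)|\ge\sum_{i\in I}n_i$ for every $I\subseteq\{1,\ldots,r\}$. Moreover, in this case such a labeled sorting process exists which is antireduced, i.e. for every $i$ one has $w_{i-1}^{-1}\beta_i\in-\Pi$, where $w_{i}=\sigma_{\beta_i}\cdots\sigma_{\beta_1}w$.
   Context: Setting: simply laced root system $\Phi$ of rank $r$, positive roots $\Phi^+$, $\Phi^-=-\Phi^+$, simple roots $\Pi=\{\alpha_1,\ldots,\alpha_r\}$, Weyl group $W$ with length $\ell$, reflections $\sigma_\alpha$. $\mathrm{supp}\,v$ is the set of simple roots with nonzero coefficient in $v$. For $I\subseteq\{1,\ldots,r\}$, $R_I(w)$ is the set of $\alpha\in\Phi^+\cap w\Phi^-$ whose support contains some $\alpha_i$, $i\in I$. A sorting process of $w$ (with $N=\ell(w)$) is a sequence of positive roots $\beta_1,\ldots,\beta_N$ with $w=\sigma_{\beta_1}\cdots\sigma_{\beta_N}$ and $\ell(\sigma_{\beta_i}\cdots\sigma_{\beta_1}w)=N-i$ for all $0\le i\le N$. A labeled sorting process is a sorting process together with labels $f(k)\in\mathrm{supp}\,\beta_k$, $k=1,\ldots,N$ (each label a simple root). *)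

theory Defs
  imports "HOL-Analysis.Analysis"
begin

definition refl :: "'a::euclidean_space \<Rightarrow> 'a \<Rightarrow> 'a" where
  "refl a v = v - ((2 * (v \<bullet> a)) / (a \<bullet> a)) *\<^sub>R a"

definition coord :: "nat \<Rightarrow> (nat \<Rightarrow> 'a::euclidean_space) \<Rightarrow> nat \<Rightarrow> 'a \<Rightarrow> real" where
  "coord r alpha i v = (SOME c. v = (\<Sum>j=1..r. c j *\<^sub>R alpha j)) i"

definition supp :: "nat \<Rightarrow> (nat \<Rightarrow> 'a::euclidean_space) \<Rightarrow> 'a \<Rightarrow> nat set" where
  "supp r alpha v = {i \<in> {1..r}. coord r alpha i v \<noteq> 0}"

definition simply_laced_root_system ::
  "'a::euclidean_space set \<Rightarrow> nat \<Rightarrow> (nat \<Rightarrow> 'a) \<Rightarrow> bool" where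
  "simply_laced_root_system Phi r alpha \<longleftrightarrow>
     finite Phi \<and> 0 \<notin> Phi \<and>
     (\<forall>a\<in>Phi. \<forall>b\<in>Phi. refl a b \<in> Phi) \<and>
     (\<forall>a\<in>Phi. \<forall>c::real. c *\<^sub>R a \<in> Phi \<longrightarrow> c = 1 \<or> c = -1) \<and>
     (\<forall>a\<in>Phi. \<forall>b\<in>Phi. (2 * (b \<bullet> a)) / (a \<bullet> a) \<in> \<int>) \<and>
     (\<forall>a\<in>Phi. \<forall>b\<in>Phi. norm a = norm b) \<and>
     inj_on alpha {1..r} \<and> alpha ` {1..r} \<subseteq> Phi \<and>
     independent (alpha ` {1..r}) \<and>
     (\<forall>b\<in>Phi. \<exists>c::nat \<Rightarrow> int. b = (\<Sum>j=1..r. of_int (c j) *\<^sub>R alpha j) \<and>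
        ((\<forall>j\<in>{1..r}. c j \<ge> 0) \<or> (\<forall>j\<in>{1..r}. c j \<le> 0)))"

definition pos_roots :: "'a::euclidean_space set \<Rightarrow> nat \<Rightarrow> (nat \<Rightarrow> 'a) \<Rightarrow> 'a set" where
  "pos_roots Phi r alpha = {b \<in> Phi. \<forall>i\<in>{1..r}. coord r alpha i b \<ge> 0}"

definition neg_roots :: "'a::euclidean_space set \<Rightarrow> nat \<Rightarrow> (nat \<Rightarrow> 'a) \<Rightarrow> 'a set" where
  "neg_roots Phi r alpha = uminus ` pos_roots Phi r alpha"

inductive_set weyl_group :: "'a::euclidean_space set \<Rightarrow> ('a \<Rightarrow> 'a) set" for Phi where
  id_in: "id \<in> weyl_group Phi"
| refl_in: "a \<in> Phi \<Longrightarrow> w \<in> weyl_group Phi \<Longrightarrow> refl a \<circ> w \<in> weyl_group Phi"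

definition refl_prod :: "'a::euclidean_space list \<Rightarrow> 'a \<Rightarrow> 'a" where
  "refl_prod bs = foldr (\<lambda>b f. refl b \<circ> f) bs id"

definition wlen :: "nat \<Rightarrow> (nat \<Rightarrow> 'a::euclidean_space) \<Rightarrow> ('a \<Rightarrow> 'a) \<Rightarrow> nat" where
  "wlen r alpha w = (LEAST k. \<exists>is. length is = k \<and> set is \<subseteq> {1..r} \<and>
                                    w = refl_prod (map alpha is))"

definition R_set :: "'a::euclidean_space set \<Rightarrow> nat \<Rightarrow> (nat \<Rightarrow> 'a) \<Rightarrow> nat set \<Rightarrow> ('a \<Rightarrow> 'a) \<Rightarrow> 'a set" where
  "R_set Phi r alpha I w = {b \<in> pos_roots Phi r alpha \<inter> w ` neg_roots Phi r alpha.
                               \<exists>i\<in>I. i \<in> supp r alpha b}"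

definition partial_w :: "'a::euclidean_space list \<Rightarrow> ('a \<Rightarrow> 'a) \<Rightarrow> nat \<Rightarrow> 'a \<Rightarrow> 'a" where
  "partial_w bs w i = refl_prod (rev (take i bs)) \<circ> w"

definition sorting_process ::
  "'a::euclidean_space set \<Rightarrow> nat \<Rightarrow> (nat \<Rightarrow> 'a) \<Rightarrow> ('a \<Rightarrow> 'a) \<Rightarrow> 'a list \<Rightarrow> bool" where
  "sorting_process Phi r alpha w bs \<longleftrightarrow>
     length bs = wlen r alpha w \<and>
     set bs \<subseteq> pos_roots Phi r alpha \<and>
     w = refl_prod bs \<and>
     (\<forall>i\<le>length bs. wlen r alpha (partial_w bs w i) = length bs - i)"

text \<open>Labels ls ! (k-1) is the label f(k) of beta_k = bs ! (k-1), given as the index of a simple root.\<close>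
definition labeled_sorting_process ::
  "'a::euclidean_space set \<Rightarrow> nat \<Rightarrow> (nat \<Rightarrow> 'a) \<Rightarrow> ('a \<Rightarrow> 'a) \<Rightarrow> 'a list \<Rightarrow> nat list \<Rightarrow> bool" where
  "labeled_sorting_process Phi r alpha w bs ls \<longleftrightarrow>
     sorting_process Phi r alpha w bs \<and> length ls = length bs \<and>
     (\<forall>k<length bs. ls ! k \<in> supp r alpha (bs ! k))"

definition label_mult :: "nat list \<Rightarrow> nat \<Rightarrow> nat" where
  "label_mult ls j = length (filter (\<lambda>x. x = j) ls)"

definition antireduced ::
  "nat \<Rightarrow> (nat \<Rightarrow> 'a::euclidean_space) \<Rightarrow> ('a \<Rightarrow> 'a) \<Rightarrow> 'a list \<Rightarrow> bool" where
  "antireduced r alpha w bs \<longleftrightarrow>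
     (\<forall>k<length bs. inv (partial_w bs w k) (bs ! k) \<in> uminus ` alpha ` {1..r})"

end

theory Submission
  imports Defs
begin

text \<open>
  Necessity.  Along a sorting process w = w_0, w_1, ..., w_N = 1 every step w_k = s_b w_(k-1)
  lowers the length by one, and it lowers |R_I| by at least one whenever supp b meets I.  To see
  the latter, replace w_(k-1) by the shortest element x = y w_(k-1) of its coset under the
  parabolic subgroup generated by the simple reflections outside I: y fixes all I-coordinates, so
  it does not change |R_I|, and R_I(x) is the whole inversion set of x, of size l(x).  Since the
  label of b lies in supp b, at most |R_I(w)| labels lie in I.

  Sufficiency.  Repeatedly removing a simple root sent to a negative root yields an antireduced
  sorting process whose roots are exactly the inversion set Phi+ \<inter> w Phi-, each once.  The
  labels are then chosen by a Hall-type marriage argument, whose Hall condition is precisely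
  the inequality between |R_I(w)| and the sum of the n_i over I.
\<close>

section \<open>Reflections\<close>

lemma refl_self: "a \<noteq> 0 \<Longrightarrow> refl a a = - a"
  unfolding refl_def by (simp add: scaleR_2)

lemma refl_refl: "a \<noteq> 0 \<Longrightarrow> refl a (refl a x) = x"
  unfolding refl_def by (simp add: algebra_simps)

lemma refl_comp_refl: "a \<noteq> 0 \<Longrightarrow> refl a \<circ> refl a = id"
  by (simp add: fun_eq_iff refl_refl)

lemma inv_refl: "a \<noteq> 0 \<Longrightarrow> inv (refl a) = refl a"
  by (rule inv_unique_comp) (simp_all add: refl_comp_refl)

lemma bij_refl: "a \<noteq> 0 \<Longrightarrow> bij (refl a)"
  using o_bij refl_comp_refl by blast

lemma inv_refl_comp: "a \<noteq> 0 \<Longrightarrow> bij v \<Longrightarrow> inv (refl a \<circ> v) = inv v \<circ> refl a"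
  by (simp add: o_inv_distrib bij_refl inv_refl)

lemma inv_comp_refl: "a \<noteq> 0 \<Longrightarrow> bij v \<Longrightarrow> inv (v \<circ> refl a) = refl a \<circ> inv v"
  by (simp add: o_inv_distrib bij_refl inv_refl)

lemma linear_refl: "linear (refl a)"
  unfolding refl_def
  by (rule linearI) (auto simp: algebra_simps add_divide_distrib)

lemma inner_refl: "a \<noteq> 0 \<Longrightarrow> refl a x \<bullet> refl a y = x \<bullet> y"
  unfolding refl_def by (simp add: algebra_simps inner_commute)

lemma orthogonal_transformation_refl: "a \<noteq> 0 \<Longrightarrow> orthogonal_transformation (refl a)"
  unfolding orthogonal_transformation_def by (simp add: linear_refl inner_refl)

lemma refl_uminus: "refl (- a) = refl a"
  unfolding refl_def by (rule ext) simp

lemma refl_conj: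
  assumes "orthogonal_transformation v"
  shows "refl (v a) \<circ> v = v \<circ> refl a"
  using assms unfolding orthogonal_transformation_def refl_def
  by (simp add: fun_eq_iff linear_diff linear_cmul)

lemma refl_prod_Nil: "refl_prod [] = id"
  unfolding refl_prod_def by simp

lemma refl_prod_Cons: "refl_prod (b # bs) = refl b \<circ> refl_prod bs"
  unfolding refl_prod_def by simp

lemma refl_prod_append: "refl_prod (xs @ ys) = refl_prod xs \<circ> refl_prod ys"
  by (induction xs) (simp_all add: refl_prod_Nil refl_prod_Cons o_assoc)

lemma partial_w_0: "partial_w bs w 0 = w"
  unfolding partial_w_def by (simp add: refl_prod_Nil)

lemma partial_w_Suc: "k < length bs \<Longrightarrow> partial_w bs w (Suc k) = refl (bs ! k) \<circ> partial_w bs w k"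
  unfolding partial_w_def by (simp add: take_Suc_conv_app_nth refl_prod_Cons o_assoc)

lemma partial_w_Cons_Suc: "partial_w (b # bs) w (Suc k) = partial_w bs (refl b \<circ> w) k"
  unfolding partial_w_def by (simp add: refl_prod_append refl_prod_Cons refl_prod_Nil o_assoc)

lemma sorting_process_Cons:
  assumes sp: "sorting_process Phi r alpha (refl b \<circ> v) bs"
    and b: "b \<in> pos_roots Phi r alpha" "b \<noteq> 0"
    and len: "wlen r alpha v = Suc (wlen r alpha (refl b \<circ> v))"
  shows "sorting_process Phi r alpha v (b # bs)"
  unfolding sorting_process_def
proof (intro conjI allI impI)
  have bs: "length bs = wlen r alpha (refl b \<circ> v)" "set bs \<subseteq> pos_roots Phi r alpha"
    "refl b \<circ> v = refl_prod bs"
    "\<forall>i\<le>length bs. wlen r alpha (partial_w bs (refl b \<circ> v) i) = length bs - i"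
    using sp unfolding sorting_process_def by auto
  show "length (b # bs) = wlen r alpha v" using bs(1) len by simp
  show "set (b # bs) \<subseteq> pos_roots Phi r alpha" using bs(2) b(1) by simp
  show "v = refl_prod (b # bs)"
    using bs(3)[symmetric] refl_refl[OF b(2)] by (simp add: refl_prod_Cons fun_eq_iff)
  fix i assume "i \<le> length (b # bs)"
  then show "wlen r alpha (partial_w (b # bs) v i) = length (b # bs) - i"
    using bs(1,4) len by (cases i) (simp_all add: partial_w_0 partial_w_Cons_Suc)
qed

lemma antireduced_Cons:
  assumes "antireduced r alpha (refl b \<circ> v) bs" and "inv v b \<in> uminus ` alpha ` {1..r}"
  shows "antireduced r alpha v (b # bs)"
  unfolding antireduced_def
proof (intro allI impI)
  fix k assume "k < length (b # bs)"
  then show "inv (partial_w (b # bs) v k) ((b # bs) ! k) \<in> uminus ` alpha ` {1..r}"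
    using assms unfolding antireduced_def by (cases k) (simp_all add: partial_w_0 partial_w_Cons_Suc)
qed

lemma label_mult_Nil: "label_mult [] i = 0"
  by (simp add: label_mult_def)

lemma label_mult_Cons: "label_mult (x # ls) i = (if x = i then 1 else 0) + label_mult ls i"
  by (simp add: label_mult_def)

lemma sum_label_mult: "finite I \<Longrightarrow> (\<Sum>i\<in>I. label_mult ls i) = length (filter (\<lambda>x. x \<in> I) ls)"
  by (induction ls) (simp_all add: label_mult_Nil label_mult_Cons sum.distrib)

section \<open>Assigning labels with prescribed multiplicities\<close>
lemma sum_fun_upd_pred:
  fixes n :: "'l \<Rightarrow> nat"
  assumes "finite I" and "0 < n i"
  shows "(\<Sum>k\<in>I. (n(i := n i - 1)) k) = (\<Sum>k\<in>I. n k) - (if i \<in> I then 1 else 0)"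
proof (cases "i \<in> I")
  case True
  have "(\<Sum>k\<in>I. (n(i := n i - 1)) k) = (n i - 1) + (\<Sum>k\<in>I - {i}. n k)"
    using sum.remove[OF assms(1) True, of "n(i := n i - 1)"] by simp
  moreover have "(\<Sum>k\<in>I. n k) = n i + (\<Sum>k\<in>I - {i}. n k)" using sum.remove[OF assms(1) True] .
  ultimately show ?thesis using True assms(2) by simp
qed (auto intro: sum.cong)

definition hall_condition :: "'s set \<Rightarrow> 'l set \<Rightarrow> ('s \<Rightarrow> 'l set) \<Rightarrow> ('l \<Rightarrow> nat) \<Rightarrow> bool" where
  "hall_condition S L A n \<longleftrightarrow>
     (\<forall>s\<in>S. A s \<subseteq> L) \<and> (\<Sum>i\<in>L. n i) = card S \<and>
     (\<forall>I\<subseteq>L. (\<Sum>i\<in>I. n i) \<le> card {s\<in>S. A s \<inter> I \<noteq> {}})"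

definition has_assignment :: "'s set \<Rightarrow> 'l set \<Rightarrow> ('s \<Rightarrow> 'l set) \<Rightarrow> ('l \<Rightarrow> nat) \<Rightarrow> bool" where
  "has_assignment S L A n \<longleftrightarrow>
     (\<exists>f. (\<forall>s\<in>S. f s \<in> A s) \<and> (\<forall>i\<in>L. card {s\<in>S. f s = i} = n i))"

lemma hall_condition_tight_part:
  assumes H: "hall_condition S L A n" and "I \<subseteq> L"
    and tight: "(\<Sum>i\<in>I. n i) = card {s\<in>S. A s \<inter> I \<noteq> {}}"
  shows "hall_condition {s\<in>S. A s \<inter> I \<noteq> {}} I (\<lambda>s. A s \<inter> I) n"
  unfolding hall_condition_def
proof (intro conjI allI impI)
  fix K assume "K \<subseteq> I"
  then have "{s\<in>{s\<in>S. A s \<inter> I \<noteq> {}}. A s \<inter> I \<inter> K \<noteq> {}} = {s\<in>S. A s \<inter> K \<noteq> {}}"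
    and "K \<subseteq> L" using \<open>I \<subseteq> L\<close> by blast+
  then show "(\<Sum>i\<in>K. n i) \<le> card {s\<in>{s\<in>S. A s \<inter> I \<noteq> {}}. A s \<inter> I \<inter> K \<noteq> {}}"
    using H unfolding hall_condition_def by simp
qed (use tight in auto)

lemma hall_condition_tight_rest:
  assumes H: "hall_condition S L A n" and fS: "finite S" and fL: "finite L" and I: "I \<subseteq> L"
    and tight: "(\<Sum>i\<in>I. n i) = card {s\<in>S. A s \<inter> I \<noteq> {}}"
  shows "hall_condition (S - {s\<in>S. A s \<inter> I \<noteq> {}}) (L - I) A n"
  unfolding hall_condition_def
proof (intro conjI allI impI)
  define S1 where "S1 = {s\<in>S. A s \<inter> I \<noteq> {}}"
  have fS1: "finite S1" and S1S: "S1 \<subseteq> S" using fS unfolding S1_def by auto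
  have AL: "\<forall>s\<in>S. A s \<subseteq> L" and tot: "(\<Sum>i\<in>L. n i) = card S"
    using H unfolding hall_condition_def by auto
  show "\<forall>s\<in>S - S1. A s \<subseteq> L - I" using AL unfolding S1_def by blast
  have "(\<Sum>i\<in>L. n i) = (\<Sum>i\<in>L - I. n i) + (\<Sum>i\<in>I. n i)"
    using sum.subset_diff[OF I fL] .
  then show "(\<Sum>i\<in>L - I. n i) = card (S - S1)"
    using tot tight card_Diff_subset[OF fS1 S1S] card_mono[OF fS S1S] unfolding S1_def by simp
  fix K assume K: "K \<subseteq> L - I"
  have "card {s\<in>S. A s \<inter> (K \<union> I) \<noteq> {}} = card ({s\<in>S - S1. A s \<inter> K \<noteq> {}} \<union> S1)"
    unfolding S1_def by (rule arg_cong[where f = card]) blast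
  also have "\<dots> = card {s\<in>S - S1. A s \<inter> K \<noteq> {}} + card S1"
    using fS fS1 by (intro card_Un_disjoint) auto
  finally have "card {s\<in>S. A s \<inter> (K \<union> I) \<noteq> {}} = card {s\<in>S - S1. A s \<inter> K \<noteq> {}} + card S1" .
  moreover have "(\<Sum>i\<in>K \<union> I. n i) = (\<Sum>i\<in>K. n i) + (\<Sum>i\<in>I. n i)"
    using K finite_subset[OF I fL] finite_subset[OF _ fL] by (intro sum.union_disjoint) auto
  moreover have "K \<union> I \<subseteq> L" using K I by blast
  then have "(\<Sum>i\<in>K \<union> I. n i) \<le> card {s\<in>S. A s \<inter> (K \<union> I) \<noteq> {}}"
    using H unfolding hall_condition_def by blast
  ultimately show "(\<Sum>i\<in>K. n i) \<le> card {s\<in>S - S1. A s \<inter> K \<noteq> {}}"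
    using tight unfolding S1_def by linarith
qed

lemma has_assignment_Un:
  assumes "S1 \<inter> S2 = {}"
    and "has_assignment S1 I (\<lambda>s. A s \<inter> I) n" and "has_assignment S2 (L - I) A n"
    and "\<forall>s\<in>S2. A s \<subseteq> L - I"
  shows "has_assignment (S1 \<union> S2) L A n"
proof -
  obtain f1 where f1: "\<forall>s\<in>S1. f1 s \<in> A s \<inter> I" "\<forall>i\<in>I. card {s\<in>S1. f1 s = i} = n i"
    using assms(2) unfolding has_assignment_def by blast
  obtain f2 where f2: "\<forall>s\<in>S2. f2 s \<in> A s" "\<forall>i\<in>L - I. card {s\<in>S2. f2 s = i} = n i"
    using assms(3) unfolding has_assignment_def by blast
  define f where "f s = (if s \<in> S1 then f1 s else f2 s)" for s
  have "\<forall>s\<in>S2. f2 s \<notin> I" using f2(1) assms(4) by blast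
  then have "{s\<in>S1 \<union> S2. f s = i} = (if i \<in> I then {s\<in>S1. f1 s = i} else {s\<in>S2. f2 s = i})" for i
    using f1(1) assms(1) unfolding f_def by auto
  then show ?thesis
    unfolding has_assignment_def using f1 f2 assms(1) by (intro exI[of _ f]) (auto simp: f_def)
qed

lemma hall_condition_remove:
  assumes H: "hall_condition S L A n" and fS: "finite S" and fL: "finite L"
    and no_tight: "\<not> (\<exists>I\<subseteq>L. 0 < (\<Sum>i\<in>I. n i) \<and> (\<Sum>i\<in>I. n i) < card S \<and>
                        (\<Sum>i\<in>I. n i) = card {s\<in>S. A s \<inter> I \<noteq> {}})"
    and i: "i \<in> L" "n i > 0" and s: "s \<in> S" "i \<in> A s"
  shows "hall_condition (S - {s}) L A (n(i := n i - 1))"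
  unfolding hall_condition_def
proof (intro conjI allI impI)
  let ?n = "n(i := n i - 1)"
  have AL: "\<forall>s\<in>S. A s \<subseteq> L" and tot: "(\<Sum>i\<in>L. n i) = card S"
    and HI: "\<And>I. I \<subseteq> L \<Longrightarrow> (\<Sum>k\<in>I. n k) \<le> card {t\<in>S. A t \<inter> I \<noteq> {}}"
    using H unfolding hall_condition_def by auto
  have sum_n: "(\<Sum>k\<in>I. ?n k) = (\<Sum>k\<in>I. n k) - (if i \<in> I then 1 else 0)" if "I \<subseteq> L" for I
    using sum_fun_upd_pred[of I n i] finite_subset[OF that fL] i(2) by simp
  show "\<forall>t\<in>S - {s}. A t \<subseteq> L" using AL by blast
  show "(\<Sum>k\<in>L. ?n k) = card (S - {s})" using sum_n[of L] tot i s fS by simp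
  fix I assume I: "I \<subseteq> L"
  let ?NI = "{t\<in>S. A t \<inter> I \<noteq> {}}"
  have "{t\<in>S - {s}. A t \<inter> I \<noteq> {}} = ?NI - {s}" by blast
  then have cN: "card ?NI \<le> Suc (card {t\<in>S - {s}. A t \<inter> I \<noteq> {}})"
    using fS by (cases "s \<in> ?NI") (auto simp: card_Suc_Diff1)
  show "(\<Sum>k\<in>I. ?n k) \<le> card {t\<in>S - {s}. A t \<inter> I \<noteq> {}}"
  proof (cases "i \<in> I \<or> (\<Sum>k\<in>I. n k) = 0")
    case True
    then show ?thesis using sum_n[OF I] HI[OF I] cN by auto
  next
    case False
    have "(\<Sum>k\<in>L. n k) = (\<Sum>k\<in>L - I. n k) + (\<Sum>k\<in>I. n k)" using sum.subset_diff[OF I fL] .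
    moreover have "n i \<le> (\<Sum>k\<in>L - I. n k)"
      using member_le_sum[of i "L - I" n] fL i(1) False by simp
    ultimately have "(\<Sum>k\<in>I. n k) < card S" using tot i(2) by linarith
    moreover have "0 < (\<Sum>k\<in>I. n k)" using False by simp
    ultimately have "(\<Sum>k\<in>I. n k) \<noteq> card ?NI" using no_tight I by blast
    then have "(\<Sum>k\<in>I. n k) < card ?NI" using HI[OF I] by simp
    then show ?thesis using sum_n[OF I] False cN by simp
  qed
qed

lemma has_assignment_insert:
  assumes "has_assignment (S - {s}) L A (n(i := n i - 1))"
    and "finite S" "s \<in> S" "i \<in> A s" "n i > 0"
  shows "has_assignment S L A n"
proof -
  obtain f where f: "\<forall>t\<in>S - {s}. f t \<in> A t" "\<forall>k\<in>L. card {t\<in>S - {s}. f t = k} = (n(i := n i - 1)) k"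
    using assms(1) unfolding has_assignment_def by blast
  have "card {t\<in>S. (f(s := i)) t = k} = n k" if "k \<in> L" for k
  proof (cases "k = i")
    case True
    have "{t\<in>S. (f(s := i)) t = k} = insert s {t\<in>S - {s}. f t = k}" using True assms(3) by auto
    then show ?thesis using f(2) that True assms(2,5) by simp
  next
    case False
    have "{t\<in>S. (f(s := i)) t = k} = {t\<in>S - {s}. f t = k}" using False by auto
    then show ?thesis using f(2) that False by simp
  qed
  then show ?thesis unfolding has_assignment_def using f(1) assms(4) by (intro exI[of _ "f(s := i)"]) auto
qed

text \<open>Induction on the size of S: split off a tight set of labels if there is one; otherwise any
  admissible label may be assigned to any element.\<close>
theorem hall_multiplicities:
  assumes "finite S" "finite L" "hall_condition S L A n"
  shows "has_assignment S L A n"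
  using assms
proof (induction "card S" arbitrary: S L A n rule: less_induct)
  case less
  have AL: "\<forall>s\<in>S. A s \<subseteq> L" and tot: "(\<Sum>i\<in>L. n i) = card S"
    and H: "\<And>I. I \<subseteq> L \<Longrightarrow> (\<Sum>i\<in>I. n i) \<le> card {s\<in>S. A s \<inter> I \<noteq> {}}"
    using less.prems(3) unfolding hall_condition_def by auto
  show ?case
  proof (cases "\<exists>I\<subseteq>L. 0 < (\<Sum>i\<in>I. n i) \<and> (\<Sum>i\<in>I. n i) < card S \<and>
                        (\<Sum>i\<in>I. n i) = card {s\<in>S. A s \<inter> I \<noteq> {}}")
    case True
    then obtain I where I: "I \<subseteq> L" "0 < (\<Sum>i\<in>I. n i)" "(\<Sum>i\<in>I. n i) < card S"
      and tight: "(\<Sum>i\<in>I. n i) = card {s\<in>S. A s \<inter> I \<noteq> {}}" by blast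
    define S1 where "S1 = {s\<in>S. A s \<inter> I \<noteq> {}}"
    have fS1: "finite S1" and fI: "finite I"
      using less.prems(1,2) finite_subset[OF I(1)] unfolding S1_def by auto
    have "card S1 < card S" using I(3) tight unfolding S1_def by simp
    from less.hyps[OF this fS1 fI] have "has_assignment S1 I (\<lambda>s. A s \<inter> I) n"
      using hall_condition_tight_part[OF less.prems(3) I(1) tight] unfolding S1_def by blast
    moreover have "S1 \<noteq> {}" using I(2) tight unfolding S1_def by (metis card.empty less_irrefl)
    then have "card (S - S1) < card S"
      using less.prems(1) by (intro psubset_card_mono) (auto simp: S1_def)
    from less.hyps[OF this] have "has_assignment (S - S1) (L - I) A n"
      using less.prems(1,2) hall_condition_tight_rest[OF less.prems(3,1,2) I(1) tight]
      unfolding S1_def by blast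
    moreover have "S = S1 \<union> (S - S1)" "\<forall>s\<in>S - S1. A s \<subseteq> L - I"
      using AL unfolding S1_def by blast+
    ultimately show ?thesis using has_assignment_Un[of S1 "S - S1" I A n L] by auto
  next
    case no_tight: False
    show ?thesis
    proof (cases "S = {}")
      case True
      then have "\<forall>i\<in>L. n i = 0" using tot less.prems(2) by simp
      then show ?thesis using True unfolding has_assignment_def by simp
    next
      case False
      then have "(\<Sum>i\<in>L. n i) \<noteq> 0" using tot less.prems(1) by simp
      then obtain i where i: "i \<in> L" "n i > 0" by (meson not_gr0 sum.neutral)
      then have "0 < card {s\<in>S. A s \<inter> {i} \<noteq> {}}" using H[of "{i}"] by simp
      then obtain s where s: "s \<in> S" "i \<in> A s" by (auto simp: card_gt_0_iff)
      have "has_assignment (S - {s}) L A (n(i := n i - 1))"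
        using less.hyps[OF card_Diff1_less[OF less.prems(1) s(1)] _ less.prems(2)]
          hall_condition_remove[OF less.prems(3,1,2) no_tight i s] less.prems(1) by blast
      from has_assignment_insert[OF this less.prems(1) s i(2)] show ?thesis .
    qed
  qed
qed

section \<open>Simply laced root systems\<close>

text \<open>The equal length of all roots is never used below.\<close>

locale simply_laced =
  fixes Phi :: "'a::euclidean_space set" and r :: nat and alpha :: "nat \<Rightarrow> 'a"
  assumes simply_laced: "simply_laced_root_system Phi r alpha"
begin

lemma finite_Phi: "finite Phi" and zero_notin_Phi: "0 \<notin> Phi"
  and refl_in_Phi: "a\<in>Phi \<Longrightarrow> b\<in>Phi \<Longrightarrow> refl a b \<in> Phi"
  and Phi_reduced: "a\<in>Phi \<Longrightarrow> c *\<^sub>R a \<in> Phi \<Longrightarrow> c = 1 \<or> c = -1"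
  and inj_alpha: "inj_on alpha {1..r}" and alpha_in_Phi: "i\<in>{1..r} \<Longrightarrow> alpha i \<in> Phi"
  and independent_alpha: "independent (alpha ` {1..r})"
  and Phi_int_comb: "b \<in> Phi \<Longrightarrow> \<exists>c::nat \<Rightarrow> int. b = (\<Sum>j=1..r. of_int (c j) *\<^sub>R alpha j) \<and>
        ((\<forall>j\<in>{1..r}. c j \<ge> 0) \<or> (\<forall>j\<in>{1..r}. c j \<le> 0))"
  using simply_laced unfolding simply_laced_root_system_def by auto

abbreviation "crd \<equiv> coord r alpha"

definition scomb :: "(nat \<Rightarrow> real) \<Rightarrow> 'a" where
  "scomb c = (\<Sum>j=1..r. c j *\<^sub>R alpha j)"

lemma scomb_eq_0D:
  assumes "scomb c = 0" "i \<in> {1..r}"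
  shows "c i = 0"
proof -
  let ?u = "\<lambda>v. c (inv_into {1..r} alpha v)"
  have "(\<Sum>v\<in>alpha`{1..r}. ?u v *\<^sub>R v) = (\<Sum>j=1..r. ?u (alpha j) *\<^sub>R alpha j)"
    by (rule sum.reindex[OF inj_alpha, unfolded comp_def])
  also have "\<dots> = (\<Sum>j=1..r. c j *\<^sub>R alpha j)"
  proof (rule sum.cong)
    fix j assume "j \<in> {1..r}"
    then show "?u (alpha j) *\<^sub>R alpha j = c j *\<^sub>R alpha j" using inv_into_f_f[OF inj_alpha] by metis
  qed simp
  finally have "(\<Sum>v\<in>alpha`{1..r}. ?u v *\<^sub>R v) = 0" using assms unfolding scomb_def by simp
  moreover have H: "\<forall>c. (\<Sum>v\<in>alpha`{1..r}. c v *\<^sub>R v) = 0 \<longrightarrow> (\<forall>v\<in>alpha`{1..r}. c v = 0)"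
    using independent_alpha unfolding independent_explicit by blast
  ultimately have "?u (alpha i) = 0" using H[rule_format, of ?u] assms(2) by blast
  then show ?thesis using inv_into_f_f[OF inj_alpha assms(2)] by simp
qed

lemma scomb_add: "scomb c + scomb d = scomb (\<lambda>j. c j + d j)"
  unfolding scomb_def by (simp add: scaleR_add_left sum.distrib)
lemma scaleR_scomb: "a *\<^sub>R scomb c = scomb (\<lambda>j. a * c j)"
  unfolding scomb_def by (simp add: scaleR_sum_right)
lemma scomb_diff: "scomb c - scomb d = scomb (\<lambda>j. c j - d j)"
  unfolding scomb_def by (simp add: scaleR_diff_left sum_subtractf)
lemma scomb_0: "scomb (\<lambda>j. 0) = 0"
  unfolding scomb_def by simp

lemma scomb_eqD:
  assumes "scomb c = scomb d" "i \<in> {1..r}"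
  shows "c i = d i"
proof -
  have "scomb (\<lambda>j. c j - d j) = 0" using assms(1) scomb_diff[of c d] by simp
  from scomb_eq_0D[OF this assms(2)] show ?thesis by simp
qed

lemma coord_scomb:
  assumes "i \<in> {1..r}"
  shows "crd i (scomb c) = c i"
proof -
  have "\<exists>d. scomb c = (\<Sum>j=1..r. d j *\<^sub>R alpha j)" unfolding scomb_def by blast
  then have "scomb c = (\<Sum>j=1..r. (SOME d. scomb c = (\<Sum>j=1..r. d j *\<^sub>R alpha j)) j *\<^sub>R alpha j)"
    by (rule someI_ex)
  then have "scomb c = scomb (SOME d. scomb c = (\<Sum>j=1..r. d j *\<^sub>R alpha j))" unfolding scomb_def .
  from scomb_eqD[OF this[symmetric] assms] show ?thesis unfolding coord_def scomb_def by simp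
qed

definition in_span :: "'a \<Rightarrow> bool" where
  "in_span v \<longleftrightarrow> (\<exists>c. v = scomb c)"

lemma scomb_coord: "in_span v \<Longrightarrow> v = scomb (\<lambda>j. crd j v)"
proof -
  assume "in_span v"
  then obtain c where c: "v = scomb c" unfolding in_span_def by blast
  have "scomb (\<lambda>j. crd j v) = scomb c" unfolding scomb_def
  proof (rule sum.cong)
    fix j assume "j \<in> {1..r}"
    then show "crd j v *\<^sub>R alpha j = c j *\<^sub>R alpha j" using coord_scomb[of j c] c by simp
  qed simp
  then show ?thesis using c by simp
qed

lemma coord_add: "in_span x \<Longrightarrow> in_span y \<Longrightarrow> i\<in>{1..r} \<Longrightarrow>
   crd i (x + y) = crd i x + crd i y"
proof -
  assume a: "in_span x" "in_span y" "i\<in>{1..r}"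
  obtain c d where "x = scomb c" "y = scomb d" using a unfolding in_span_def by blast
  then show ?thesis using a(3) by (simp add: scomb_add coord_scomb)
qed

lemma coord_scaleR: "in_span x \<Longrightarrow> i\<in>{1..r} \<Longrightarrow> crd i (c *\<^sub>R x) = c * crd i x"
proof -
  assume a: "in_span x" "i\<in>{1..r}"
  obtain d where "x = scomb d" using a unfolding in_span_def by blast
  then show ?thesis using a(2) by (simp add: scaleR_scomb coord_scomb)
qed

lemma in_span_add: "in_span x \<Longrightarrow> in_span y \<Longrightarrow> in_span (x + y)"
  unfolding in_span_def using scomb_add by blast
lemma in_span_scaleR: "in_span x \<Longrightarrow> in_span (c *\<^sub>R x)"
  unfolding in_span_def using scaleR_scomb by blast
lemma in_span_0: "in_span 0"
  unfolding in_span_def using scomb_0 by metis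

lemma alpha_eq_scomb: "i \<in> {1..r} \<Longrightarrow> alpha i = scomb (\<lambda>k. if k = i then 1 else 0)"
proof -
  assume a: "i \<in> {1..r}"
  have "(\<Sum>k=1..r. (if k = i then 1 else 0) *\<^sub>R alpha k) = (\<Sum>k=1..r. if k = i then alpha k else 0)"
    by (rule sum.cong) auto
  also have "\<dots> = alpha i" using a by (subst sum.delta) auto
  finally show ?thesis unfolding scomb_def by simp
qed
lemma in_span_alpha: "i \<in> {1..r} \<Longrightarrow> in_span (alpha i)"
  unfolding in_span_def using alpha_eq_scomb by blast
lemma in_span_Phi: "b \<in> Phi \<Longrightarrow> in_span b"
proof -
  assume "b \<in> Phi"
  then obtain c :: "nat \<Rightarrow> int" where "b = (\<Sum>j=1..r. of_int (c j) *\<^sub>R alpha j)" using Phi_int_comb by blast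
  then have "b = scomb (\<lambda>j. of_int (c j))" unfolding scomb_def .
  then show ?thesis unfolding in_span_def by blast
qed

lemma coord_alpha: "i \<in> {1..r} \<Longrightarrow> j \<in> {1..r} \<Longrightarrow> crd j (alpha i) = (if j = i then 1 else 0)"
  using alpha_eq_scomb coord_scomb by simp

lemma coord_diff: "in_span x \<Longrightarrow> in_span y \<Longrightarrow> i\<in>{1..r} \<Longrightarrow>
   crd i (x - y) = crd i x - crd i y"
proof -
  assume a: "in_span x" "in_span y" "i\<in>{1..r}"
  obtain c d where "x = scomb c" "y = scomb d" using a unfolding in_span_def by blast
  then show ?thesis using a(3) by (simp add: scomb_diff coord_scomb)
qed

lemma coord_uminus: "in_span x \<Longrightarrow> i\<in>{1..r} \<Longrightarrow> crd i (- x) = - crd i x"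
  using coord_scaleR[of x i "-1"] by simp

lemma coord_0: "i \<in> {1..r} \<Longrightarrow> crd i 0 = 0"
  using coord_scomb[of i "\<lambda>j. 0"] scomb_0 by simp

lemma in_span_eq_0_iff: "in_span x \<Longrightarrow> x = 0 \<longleftrightarrow> (\<forall>i\<in>{1..r}. crd i x = 0)"
proof
  assume "in_span x" "\<forall>i\<in>{1..r}. crd i x = 0"
  then have h: "x = scomb (\<lambda>j. crd j x)" "\<forall>i\<in>{1..r}. crd i x = 0"
    using scomb_coord by auto
  have "scomb (\<lambda>j. crd j x) = scomb (\<lambda>j. 0)" unfolding scomb_def
  proof (rule sum.cong)
    fix j assume "j \<in> {1..r}" then show "crd j x *\<^sub>R alpha j = 0 *\<^sub>R alpha j" using h(2) by simp
  qed simp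
  then show "x = 0" using scomb_0 h(1) by simp
qed (simp add: coord_0)

abbreviation "P \<equiv> pos_roots Phi r alpha"
abbreviation "N \<equiv> neg_roots Phi r alpha"

lemma coord_Phi_Ints: "b \<in> Phi \<Longrightarrow> j \<in> {1..r} \<Longrightarrow> crd j b \<in> \<int>"
proof -
  assume a: "b \<in> Phi" "j \<in> {1..r}"
  obtain c :: "nat \<Rightarrow> int" where "b = (\<Sum>j=1..r. of_int (c j) *\<^sub>R alpha j)" using Phi_int_comb[OF a(1)] by blast
  then have "b = scomb (\<lambda>j. of_int (c j))" unfolding scomb_def .
  then have "crd j b = of_int (c j)" using coord_scomb[OF a(2)] by simp
  then show ?thesis by simp
qed

lemma Phi_coord_sign: "b \<in> Phi \<Longrightarrow> (\<forall>j\<in>{1..r}. crd j b \<ge> 0) \<or> (\<forall>j\<in>{1..r}. crd j b \<le> 0)"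
proof -
  assume a: "b \<in> Phi"
  obtain c :: "nat \<Rightarrow> int" where c: "b = (\<Sum>j=1..r. of_int (c j) *\<^sub>R alpha j)"
     "(\<forall>j\<in>{1..r}. c j \<ge> 0) \<or> (\<forall>j\<in>{1..r}. c j \<le> 0)" using Phi_int_comb[OF a(1)] by blast
  have "b = scomb (\<lambda>j. of_int (c j))" using c(1) unfolding scomb_def .
  then have "\<forall>j\<in>{1..r}. crd j b = of_int (c j)" using coord_scomb by simp
  then show ?thesis using c(2) by auto
qed

lemma uminus_in_Phi: "b \<in> Phi \<Longrightarrow> - b \<in> Phi"
  using refl_in_Phi[of b b] refl_self[of b] zero_notin_Phi by (cases "b = 0") auto

lemma N_eq: "N = {b \<in> Phi. \<forall>j\<in>{1..r}. crd j b \<le> 0}"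
proof
  show "N \<subseteq> {b \<in> Phi. \<forall>j\<in>{1..r}. crd j b \<le> 0}"
    unfolding neg_roots_def pos_roots_def using uminus_in_Phi in_span_Phi coord_uminus by auto
  show "{b \<in> Phi. \<forall>j\<in>{1..r}. crd j b \<le> 0} \<subseteq> N"
  proof
    fix b assume b: "b \<in> {b \<in> Phi. \<forall>j\<in>{1..r}. crd j b \<le> 0}"
    then have "-b \<in> P" unfolding pos_roots_def using uminus_in_Phi in_span_Phi coord_uminus by auto
    then show "b \<in> N" unfolding neg_roots_def by (metis image_eqI minus_minus)
  qed
qed

lemma P_eq: "P = {b \<in> Phi. \<forall>j\<in>{1..r}. crd j b \<ge> 0}"
  unfolding pos_roots_def by simp

lemma P_subset: "P \<subseteq> Phi"
  using P_eq by auto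

lemma Phi_P_or_N: "b \<in> Phi \<Longrightarrow> b \<in> P \<or> b \<in> N"
  using Phi_coord_sign P_eq N_eq by auto

lemma P_not_N: "b \<in> P \<Longrightarrow> b \<notin> N"
proof
  assume a: "b \<in> P" "b \<in> N"
  then have "\<forall>j\<in>{1..r}. crd j b = 0" using P_eq N_eq by force
  then have "b = 0" using in_span_eq_0_iff in_span_Phi a P_subset by blast
  then show False using a P_subset zero_notin_Phi by auto
qed

lemma P_if_coord_pos: "b \<in> Phi \<Longrightarrow> j \<in> {1..r} \<Longrightarrow> crd j b > 0 \<Longrightarrow> b \<in> P"
  using Phi_P_or_N N_eq by force

lemma N_iff_uminus_P: "b \<in> N \<longleftrightarrow> - b \<in> P"
  unfolding neg_roots_def by (metis image_iff minus_minus)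

lemma alpha_in_P: "i \<in> {1..r} \<Longrightarrow> alpha i \<in> P"
  using alpha_in_Phi coord_alpha P_eq by auto

lemma alpha_neq_0: "i \<in> {1..r} \<Longrightarrow> alpha i \<noteq> 0"
  using alpha_in_Phi[of i] zero_notin_Phi by auto

lemma coord_refl_alpha: "in_span x \<Longrightarrow> i \<in> {1..r} \<Longrightarrow> j \<in> {1..r} \<Longrightarrow>
  crd j (refl (alpha i) x) = crd j x - (if j = i then (2 * (x \<bullet> alpha i)) / (alpha i \<bullet> alpha i) else 0)"
  unfolding refl_def by (simp add: coord_diff coord_scaleR in_span_scaleR in_span_alpha coord_alpha)

definition sprod :: "nat list \<Rightarrow> 'a \<Rightarrow> 'a" where
  "sprod is = refl_prod (map alpha is)"

lemma sprod_Nil[simp]: "sprod [] = id" unfolding sprod_def refl_prod_def by simp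
lemma sprod_Cons: "sprod (i # is) = refl (alpha i) \<circ> sprod is" unfolding sprod_def refl_prod_def by simp
lemma sprod_append: "sprod (is @ js) = sprod is \<circ> sprod js"
  by (induction "is") (auto simp: sprod_Cons)
lemma sprod_single: "sprod [i] = refl (alpha i)" by (simp add: sprod_Cons)

lemma orthogonal_transformation_sprod: "set is \<subseteq> {1..r} \<Longrightarrow> orthogonal_transformation (sprod is)"
  by (induction "is") (auto simp: sprod_Cons id_def intro!: orthogonal_transformation_compose orthogonal_transformation_refl alpha_neq_0)

lemma sprod_rev_comp: "set is \<subseteq> {1..r} \<Longrightarrow> sprod (rev is) \<circ> sprod is = id"
proof (induction "is")
  case Nil then show ?case by simp
next
  case (Cons i "is")
  have "sprod (rev (i#is)) \<circ> sprod (i#is) = sprod (rev is) \<circ> (refl (alpha i) \<circ> refl (alpha i)) \<circ> sprod is"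
    by (simp add: sprod_append sprod_Cons o_assoc)
  also have "refl (alpha i) \<circ> refl (alpha i) = id" using refl_comp_refl[OF alpha_neq_0] Cons.prems by simp
  finally show ?case using Cons by simp
qed

lemma sprod_comp_rev: "set is \<subseteq> {1..r} \<Longrightarrow> sprod is \<circ> sprod (rev is) = id"
  using sprod_rev_comp[of "rev is"] by simp

lemma inv_sprod: "set is \<subseteq> {1..r} \<Longrightarrow> inv (sprod is) = sprod (rev is)"
  using sprod_rev_comp sprod_comp_rev by (metis inv_unique_comp)

lemma bij_sprod: "set is \<subseteq> {1..r} \<Longrightarrow> bij (sprod is)"
  using sprod_rev_comp sprod_comp_rev by (metis o_bij)

lemma sprod_in_Phi: "set is \<subseteq> {1..r} \<Longrightarrow> b \<in> Phi \<Longrightarrow> sprod is b \<in> Phi"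
  by (induction "is" arbitrary: b) (auto simp: sprod_Cons intro!: refl_in_Phi alpha_in_Phi)

definition W :: "('a \<Rightarrow> 'a) set" where
  "W = {v. \<exists>is. set is \<subseteq> {1..r} \<and> v = sprod is}"

lemma sprod_in_W: "set is \<subseteq> {1..r} \<Longrightarrow> sprod is \<in> W" unfolding W_def by blast
lemma WE: "v \<in> W \<Longrightarrow> (\<And>is. set is \<subseteq> {1..r} \<Longrightarrow> v = sprod is \<Longrightarrow> thesis) \<Longrightarrow> thesis"
  unfolding W_def by blast
lemma W_comp: "u \<in> W \<Longrightarrow> v \<in> W \<Longrightarrow> u \<circ> v \<in> W"
  by (metis WE sprod_in_W le_sup_iff set_append sprod_append)
lemma id_in_W: "id \<in> W" using sprod_in_W[of "[]"] by simp
lemma simple_refl_in_W: "i \<in> {1..r} \<Longrightarrow> refl (alpha i) \<in> W" using sprod_in_W[of "[i]"] by (simp add: sprod_single)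
lemma inv_in_W: "v \<in> W \<Longrightarrow> inv v \<in> W" by (metis WE sprod_in_W set_rev inv_sprod)
lemma orthogonal_transformation_W: "v \<in> W \<Longrightarrow> orthogonal_transformation v" by (metis WE orthogonal_transformation_sprod)
lemma linear_W: "v \<in> W \<Longrightarrow> linear v" using orthogonal_transformation_W orthogonal_transformation_def by blast
lemma W_in_Phi: "v \<in> W \<Longrightarrow> b \<in> Phi \<Longrightarrow> v b \<in> Phi" by (metis WE sprod_in_Phi)
lemma bij_W: "v \<in> W \<Longrightarrow> bij v" by (metis WE bij_sprod)
lemma W_inv_apply: "v \<in> W \<Longrightarrow> inv v (v x) = x" using bij_W bij_inv_eq_iff by metis
lemma W_apply_inv: "v \<in> W \<Longrightarrow> v (inv v x) = x" using bij_W bij_inv_eq_iff by metis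
lemma W_uminus: "v \<in> W \<Longrightarrow> v (- x) = - v x" using linear_W linear_neg by blast

lemma simple_refl_P:
  assumes i: "i \<in> {1..r}" and g: "g \<in> P" and ne: "g \<noteq> alpha i"
  shows "refl (alpha i) g \<in> P"
proof -
  have gP: "g \<in> Phi" and sp: "in_span g" using g P_subset in_span_Phi by auto
  have "\<exists>j\<in>{1..r}. j \<noteq> i \<and> crd j g \<noteq> 0"
  proof (rule ccontr)
    assume "\<not> ?thesis"
    then have z: "\<forall>j\<in>{1..r}. j \<noteq> i \<longrightarrow> crd j g = 0" by blast
    have "g = scomb (\<lambda>j. crd j g)" by (rule scomb_coord[OF sp])
    also have "\<dots> = scomb (\<lambda>j. crd i g * (if j = i then 1 else 0))" unfolding scomb_def
      by (rule sum.cong) (use z in auto)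
    also have "\<dots> = crd i g *\<^sub>R alpha i" using alpha_eq_scomb[OF i] scaleR_scomb by simp
    finally have ge0: "g = crd i g *\<^sub>R alpha i" .
    define c where "c = crd i g"
    have ge: "g = c *\<^sub>R alpha i" using ge0 unfolding c_def .
    have "c *\<^sub>R alpha i \<in> Phi" using gP ge by simp
    then have "c = 1 \<or> c = -1" using Phi_reduced[OF alpha_in_Phi[OF i]] by blast
    moreover have "c \<ge> 0" using g i unfolding P_eq c_def by blast
    ultimately have "c = 1" by auto
    then show False using ge ne by simp
  qed
  then obtain j where j: "j \<in> {1..r}" "j \<noteq> i" "crd j g \<noteq> 0" by blast
  moreover have "crd j g \<ge> 0" using g j(1) unfolding P_eq by blast
  ultimately have "crd j g > 0" by simp
  then have "crd j (refl (alpha i) g) > 0" using coord_refl_alpha[OF sp i j(1)] j(2) by simp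
  then show ?thesis using P_if_coord_pos refl_in_Phi[OF alpha_in_Phi[OF i] gP] j(1) by blast
qed

lemma simple_refl_alpha: "i \<in> {1..r} \<Longrightarrow> refl (alpha i) (alpha i) = - alpha i"
  using refl_self alpha_neq_0 by blast

lemma uminus_P_not_P: "b \<in> P \<Longrightarrow> - b \<notin> P"
  using P_not_N N_iff_uminus_P by auto

subsection \<open>Inversion sets and length\<close>

definition inversions :: "('a \<Rightarrow> 'a) \<Rightarrow> 'a set" where
  "inversions v = {g \<in> P. v g \<in> N}"

lemma finite_inversions: "finite (inversions v)"
proof (rule finite_subset[OF _ finite_Phi])
  show "inversions v \<subseteq> Phi" unfolding inversions_def using P_subset by auto
qed

lemma inversions_simple_refl_diff:
  assumes v: "v \<in> W" and i: "i \<in> {1..r}"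
  shows "inversions (v \<circ> refl (alpha i)) - {alpha i} = refl (alpha i) ` (inversions v - {alpha i})"
proof -
  let ?s = "refl (alpha i)"
  have ss: "\<And>x. ?s (?s x) = x" using refl_refl alpha_neq_0[OF i] by blast
  have aP: "alpha i \<in> P" using alpha_in_P[OF i] .
  show ?thesis
  proof
    show "inversions (v \<circ> ?s) - {alpha i} \<subseteq> ?s ` (inversions v - {alpha i})"
    proof
      fix g assume g: "g \<in> inversions (v \<circ> ?s) - {alpha i}"
      then have gP: "g \<in> P" "g \<noteq> alpha i" "v (?s g) \<in> N" unfolding inversions_def by auto
      have dP: "?s g \<in> P" using simple_refl_P[OF i gP(1,2)] .
      have "?s g \<noteq> alpha i"
      proof
        assume "?s g = alpha i"
        then have "g = - alpha i" using ss[of g] simple_refl_alpha[OF i] by metis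
        then show False using gP(1) uminus_P_not_P[OF aP] by simp
      qed
      then have "?s g \<in> inversions v - {alpha i}" using dP gP(3) unfolding inversions_def by auto
      then show "g \<in> ?s ` (inversions v - {alpha i})" using ss[of g] by (metis image_eqI)
    qed
    show "?s ` (inversions v - {alpha i}) \<subseteq> inversions (v \<circ> ?s) - {alpha i}"
    proof
      fix g assume "g \<in> ?s ` (inversions v - {alpha i})"
      then obtain d where d: "d \<in> P" "d \<noteq> alpha i" "v d \<in> N" "g = ?s d" unfolding inversions_def by auto
      have gP: "g \<in> P" using simple_refl_P[OF i d(1,2)] d(4) by simp
      have "g \<noteq> alpha i"
      proof
        assume "g = alpha i"
        then have "d = - alpha i" using ss[of d] simple_refl_alpha[OF i] d(4) by metis
        then show False using d(1) uminus_P_not_P[OF aP] by simp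
      qed
      then show "g \<in> inversions (v \<circ> ?s) - {alpha i}" using gP d(3,4) ss unfolding inversions_def by auto
    qed
  qed
qed

lemma alpha_in_inversions_simple_refl:
  assumes v: "v \<in> W" and i: "i \<in> {1..r}"
  shows "alpha i \<in> inversions (v \<circ> refl (alpha i)) \<longleftrightarrow> v (alpha i) \<notin> N"
proof -
  have "v (refl (alpha i) (alpha i)) = - v (alpha i)" using simple_refl_alpha[OF i] W_uminus[OF v] by simp
  moreover have "v (alpha i) \<in> Phi" using W_in_Phi[OF v alpha_in_Phi[OF i]] .
  ultimately show ?thesis unfolding inversions_def using alpha_in_P[OF i] Phi_P_or_N P_not_N N_iff_uminus_P
    by (auto simp: N_iff_uminus_P)
qed

lemma card_inversions_simple_refl:
  assumes v: "v \<in> W" and i: "i \<in> {1..r}"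
  shows "card (inversions (v \<circ> refl (alpha i))) = (if v (alpha i) \<in> N then card (inversions v) - 1 else card (inversions v) + 1)"
    and "v (alpha i) \<in> N \<Longrightarrow> card (inversions v) \<ge> 1"
proof -
  let ?s = "refl (alpha i)"
  have inj: "inj ?s" using refl_refl alpha_neq_0[OF i] by (metis injI)
  have c1: "card (inversions (v \<circ> ?s) - {alpha i}) = card (inversions v - {alpha i})"
    using inversions_simple_refl_diff[OF v i] card_image[OF inj_on_subset[OF inj]] by (metis subset_UNIV)
  have inN: "alpha i \<in> inversions v \<longleftrightarrow> v (alpha i) \<in> N" unfolding inversions_def using alpha_in_P[OF i] by auto
  show "v (alpha i) \<in> N \<Longrightarrow> card (inversions v) \<ge> 1"
    using inN finite_inversions card_0_eq by (metis One_nat_def Suc_leI emptyE not_gr0)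
  show "card (inversions (v \<circ> ?s)) = (if v (alpha i) \<in> N then card (inversions v) - 1 else card (inversions v) + 1)"
  proof (cases "v (alpha i) \<in> N")
    case True
    then have "alpha i \<notin> inversions (v \<circ> ?s)" using alpha_in_inversions_simple_refl[OF v i] by simp
    then have "card (inversions (v \<circ> ?s)) = card (inversions v - {alpha i})" using c1 by simp
    also have "\<dots> = card (inversions v) - 1" using True inN finite_inversions by (simp add: card_Diff_singleton)
    finally show ?thesis using True by simp
  next
    case False
    then have a: "alpha i \<in> inversions (v \<circ> ?s)" using alpha_in_inversions_simple_refl[OF v i] by simp
    then have "card (inversions (v \<circ> ?s)) = card (inversions (v \<circ> ?s) - {alpha i}) + 1"
      using card_Suc_Diff1[OF finite_inversions a] by simp
    also have "\<dots> = card (inversions v) + 1" using c1 False inN by simp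
    finally show ?thesis using False by simp
  qed
qed

lemma exchange_condition:
  assumes "set is \<subseteq> {1..r}" "g \<in> P" "sprod is g \<in> N"
  shows "\<exists>js. length js + 1 = length is \<and> set js \<subseteq> set is \<and> sprod is \<circ> refl g = sprod js"
  using assms
proof (induction "is")
  case Nil
  then show ?case using P_not_N by simp
next
  case (Cons i "is")
  have i: "i \<in> {1..r}" and isS: "set is \<subseteq> {1..r}" using Cons.prems by auto
  show ?case
  proof (cases "sprod is g \<in> N")
    case True
    obtain js where js: "length js + 1 = length is" "set js \<subseteq> set is" "sprod is \<circ> refl g = sprod js"
      using Cons.IH[OF isS Cons.prems(2) True] by blast
    have "sprod (i # is) \<circ> refl g = sprod (i # js)" by (simp add: sprod_Cons js(3)[symmetric] o_assoc)
    then show ?thesis using js by (intro exI[of _ "i # js"]) auto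
  next
    case False
    have "sprod is g \<in> Phi" using sprod_in_Phi[OF isS] Cons.prems(2) P_subset by auto
    then have pos: "sprod is g \<in> P" using False Phi_P_or_N by blast
    have "refl (alpha i) (sprod is g) \<in> N" using Cons.prems(3) by (simp add: sprod_Cons)
    then have eq: "sprod is g = alpha i" using simple_refl_P[OF i pos] P_not_N by blast
    have g0: "g \<noteq> 0" using Cons.prems(2) P_subset zero_notin_Phi by auto
    have "refl (alpha i) \<circ> sprod is = sprod is \<circ> refl g"
      using refl_conj[OF orthogonal_transformation_sprod[OF isS], of g] eq by simp
    then have "sprod (i # is) \<circ> refl g = sprod is \<circ> (refl g \<circ> refl g)"
      by (simp add: sprod_Cons o_assoc)
    also have "refl g \<circ> refl g = id" using refl_refl[OF g0] by (auto simp: fun_eq_iff)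
    finally show ?thesis using isS by (intro exI[of _ "is"]) auto
  qed
qed

lemma in_span_sum: "finite S \<Longrightarrow> (\<forall>j\<in>S. in_span (f j)) \<Longrightarrow> in_span (\<Sum>j\<in>S. f j)"
  by (induction S rule: finite_induct) (auto intro: in_span_add in_span_0)

lemma coord_sum: "finite S \<Longrightarrow> (\<forall>j\<in>S. in_span (f j)) \<Longrightarrow> i \<in> {1..r} \<Longrightarrow>
   crd i (\<Sum>j\<in>S. f j) = (\<Sum>j\<in>S. crd i (f j))"
proof (induction S rule: finite_induct)
  case empty then show ?case using coord_0 by simp
next
  case (insert x F)
  have "crd i (f x + sum f F) = crd i (f x) + crd i (sum f F)"
    by (rule coord_add) (use insert in \<open>auto intro: in_span_sum\<close>)
  then show ?case using insert by simp
qed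

lemma coord_nonneg_apply:
  assumes v: "v \<in> W" and sp: "in_span g" and nn: "\<forall>j\<in>{1..r}. crd j g \<ge> 0"
    and h: "\<forall>j\<in>{1..r}. crd j g \<noteq> 0 \<longrightarrow> v (alpha j) \<in> P" and i: "i \<in> {1..r}"
  shows "crd i (v g) \<ge> 0"
proof -
  have "v g = v (\<Sum>j=1..r. crd j g *\<^sub>R alpha j)" using scomb_coord[OF sp] unfolding scomb_def by simp
  also have "\<dots> = (\<Sum>j=1..r. crd j g *\<^sub>R v (alpha j))"
    using linear_W[OF v] by (simp add: linear_sum linear_cmul)
  finally have e: "v g = (\<Sum>j=1..r. crd j g *\<^sub>R v (alpha j))" .
  have spj: "\<forall>j\<in>{1..r}. in_span (crd j g *\<^sub>R v (alpha j))"
    using W_in_Phi[OF v] alpha_in_Phi in_span_Phi in_span_scaleR by blast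
  have "crd i (v g) = (\<Sum>j=1..r. crd i (crd j g *\<^sub>R v (alpha j)))"
    using coord_sum[OF _ spj i] e by simp
  also have "\<dots> = (\<Sum>j=1..r. crd j g * crd i (v (alpha j)))"
    by (rule sum.cong) (use W_in_Phi[OF v] alpha_in_Phi in_span_Phi coord_scaleR i in auto)
  also have "\<dots> \<ge> 0"
  proof (rule sum_nonneg)
    fix j assume j: "j \<in> {1..r}"
    show "crd j g * crd i (v (alpha j)) \<ge> 0"
    proof (cases "crd j g = 0")
      case False
      then have "v (alpha j) \<in> P" using h j by blast
      then show ?thesis using nn j i P_eq by auto
    qed simp
  qed
  finally show ?thesis .
qed

lemma ex_simple_inversion:
  assumes v: "v \<in> W" and ne: "inversions v \<noteq> {}"
  shows "\<exists>j\<in>{1..r}. v (alpha j) \<in> N"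
proof (rule ccontr)
  assume "\<not> ?thesis"
  then have h: "\<forall>j\<in>{1..r}. v (alpha j) \<in> P" using Phi_P_or_N W_in_Phi[OF v] alpha_in_Phi by blast
  obtain g where g: "g \<in> P" "v g \<in> N" using ne unfolding inversions_def by auto
  have "\<forall>i\<in>{1..r}. crd i (v g) \<ge> 0"
    using coord_nonneg_apply[OF v] g(1) P_subset in_span_Phi P_eq h by auto
  then have "v g \<in> P" using P_eq W_in_Phi[OF v] g(1) P_subset by auto
  then show False using g(2) P_not_N by blast
qed

lemma card_inversions_le_length: "set is \<subseteq> {1..r} \<Longrightarrow> card (inversions (sprod is)) \<le> length is"
proof (induction "is" rule: rev_induct)
  case Nil
  have "inversions id = {}" unfolding inversions_def using P_not_N by auto
  then show ?case by (simp add: id_def)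
next
  case (snoc i "is")
  have i: "i \<in> {1..r}" and isS: "set is \<subseteq> {1..r}" using snoc.prems by auto
  have e: "sprod (is @ [i]) = sprod is \<circ> refl (alpha i)" by (simp add: sprod_append sprod_single)
  have c: "card (inversions (sprod is \<circ> refl (alpha i))) \<le> card (inversions (sprod is)) + 1"
    using card_inversions_simple_refl(1)[OF sprod_in_W[OF isS] i] by (cases "sprod is (alpha i) \<in> N") auto
  have "length (is @ [i]) = Suc (length is)" by simp
  then show ?case unfolding e using c snoc.IH[OF isS] by linarith
qed

lemma wlen_le_length: "set is \<subseteq> {1..r} \<Longrightarrow> v = sprod is \<Longrightarrow> wlen r alpha v \<le> length is"
  unfolding wlen_def sprod_def by (rule Least_le) blast

lemma reduced_word_exists: "v \<in> W \<Longrightarrow> \<exists>is. length is = wlen r alpha v \<and> set is \<subseteq> {1..r} \<and> v = sprod is"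
proof -
  assume "v \<in> W"
  then obtain is0 where "set is0 \<subseteq> {1..r}" "v = sprod is0" by (rule WE)
  then have ex: "\<exists>k is. length is = k \<and> set is \<subseteq> {1..r} \<and> v = refl_prod (map alpha is)"
    unfolding sprod_def by blast
  show ?thesis unfolding wlen_def sprod_def by (rule LeastI_ex[OF ex])
qed

lemma inversions_empty_imp_id:
  assumes v: "v \<in> W" and e: "inversions v = {}"
  shows "v = id"
proof -
  obtain "is" where isw: "length is = wlen r alpha v" "set is \<subseteq> {1..r}" "v = sprod is"
    using reduced_word_exists[OF v] by blast
  show ?thesis
  proof (cases "is" rule: rev_exhaust)
    case Nil then show ?thesis using isw by simp
  next
    case (snoc is' k)
    have k: "k \<in> {1..r}" and isS: "set is' \<subseteq> {1..r}" using isw(2) snoc by auto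
    have vv: "v = sprod is' \<circ> refl (alpha k)" using isw(3) snoc by (simp add: sprod_append sprod_single)
    have "v (alpha k) \<in> Phi" using W_in_Phi[OF v alpha_in_Phi[OF k]] .
    then have vP: "v (alpha k) \<in> P" using e alpha_in_P[OF k] Phi_P_or_N unfolding inversions_def by auto
    have "sprod is' (alpha k) = sprod is' (refl (alpha k) (refl (alpha k) (alpha k)))"
      by (simp add: refl_refl[OF alpha_neq_0[OF k]])
    also have "\<dots> = - v (alpha k)" using vv simple_refl_alpha[OF k] W_uminus[OF v] by simp
    finally have "sprod is' (alpha k) \<in> N" using vP N_iff_uminus_P by simp
    then obtain js where js: "length js + 1 = length is'" "set js \<subseteq> set is'" "sprod is' \<circ> refl (alpha k) = sprod js"
      using exchange_condition[OF isS alpha_in_P[OF k]] by blast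
    have "wlen r alpha v \<le> length js" using wlen_le_length[of js v] js isS vv by auto
    then show ?thesis using isw(1) snoc js(1) by simp
  qed
qed

lemma word_of_length_card_inversions: "v \<in> W \<Longrightarrow> \<exists>is. length is = card (inversions v) \<and> set is \<subseteq> {1..r} \<and> v = sprod is"
proof (induction "card (inversions v)" arbitrary: v)
  case 0
  then have "inversions v = {}" using finite_inversions by simp
  then have "v = id" using inversions_empty_imp_id 0 by blast
  then show ?case using 0 by (intro exI[of _ "[]"]) simp
next
  case (Suc n)
  then have "inversions v \<noteq> {}" by auto
  then obtain j where j: "j \<in> {1..r}" "v (alpha j) \<in> N" using ex_simple_inversion Suc by blast
  let ?v' = "v \<circ> refl (alpha j)"
  have v': "?v' \<in> W" using W_comp Suc.prems simple_refl_in_W j(1) by blast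
  have "card (inversions ?v') = n" using card_inversions_simple_refl(1)[OF Suc.prems j(1)] j(2) Suc.hyps(2) by simp
  then obtain js where js: "length js = n" "set js \<subseteq> {1..r}" "?v' = sprod js" using Suc.hyps(1) v' by metis
  have "v = ?v' \<circ> refl (alpha j)" by (simp add: fun_eq_iff refl_refl[OF alpha_neq_0[OF j(1)]])
  then have "v = sprod (js @ [j])" using js(3) by (simp add: sprod_append sprod_single)
  then show ?case using js j Suc.hyps(2) by (intro exI[of _ "js @ [j]"]) auto
qed

lemma wlen_eq_card_inversions: "v \<in> W \<Longrightarrow> wlen r alpha v = card (inversions v)"
proof -
  assume v: "v \<in> W"
  obtain "is" where isw: "length is = wlen r alpha v" "set is \<subseteq> {1..r}" "v = sprod is"
    using reduced_word_exists[OF v] by blast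
  obtain js where js: "length js = card (inversions v)" "set js \<subseteq> {1..r}" "v = sprod js"
    using word_of_length_card_inversions[OF v] by blast
  show ?thesis using card_inversions_le_length[OF isw(2)] isw wlen_le_length[OF js(2,3)] js(1) by simp
qed

lemma wlen_inv_le: "v \<in> W \<Longrightarrow> wlen r alpha (inv v) \<le> wlen r alpha v"
proof -
  assume v: "v \<in> W"
  obtain "is" where isw: "length is = wlen r alpha v" "set is \<subseteq> {1..r}" "v = sprod is"
    using reduced_word_exists[OF v] by blast
  have "inv v = sprod (rev is)" using inv_sprod[OF isw(2)] isw(3) by simp
  then show ?thesis using wlen_le_length[of "rev is" "inv v"] isw by simp
qed

lemma wlen_inv: "v \<in> W \<Longrightarrow> wlen r alpha (inv v) = wlen r alpha v"
  using wlen_inv_le[of v] wlen_inv_le[of "inv v"] inv_in_W inv_inv_eq bij_W by fastforce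

lemma wlen_refl_less:
  assumes v: "v \<in> W" and b: "b \<in> P" and h: "inv v b \<in> N"
  shows "wlen r alpha (refl b \<circ> v) < wlen r alpha v"
proof -
  obtain "is" where isw: "length is = wlen r alpha v" "set is \<subseteq> {1..r}" "v = sprod is"
    using reduced_word_exists[OF v] by blast
  have iv: "inv v = sprod (rev is)" using inv_sprod[OF isw(2)] isw(3) by simp
  obtain js where js: "length js + 1 = length (rev is)" "set js \<subseteq> set (rev is)" "sprod (rev is) \<circ> refl b = sprod js"
    using exchange_condition[of "rev is" b] isw(2) b h iv by auto
  have b0: "b \<noteq> 0" using b P_subset zero_notin_Phi by auto
  have jsS: "set js \<subseteq> {1..r}" using js(2) isw(2) by auto
  have "inv (refl b \<circ> v) = sprod js" using inv_refl_comp[OF b0 bij_W[OF v]] iv js(3) by simp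
  then have "refl b \<circ> v = sprod (rev js)"
    using inv_sprod[OF jsS] inv_inv_eq bij_comp[OF bij_W[OF v] bij_refl[OF b0]] by metis
  then have "wlen r alpha (refl b \<circ> v) \<le> length js" using wlen_le_length[of "rev js"] jsS by simp
  then show ?thesis using js(1) isw(1) by simp
qed

definition height :: "'a \<Rightarrow> real" where "height g = (\<Sum>j=1..r. crd j g)"

lemma height_pos: "b \<in> P \<Longrightarrow> 0 < height b"
proof -
  assume b: "b \<in> P"
  then have nn: "\<forall>j\<in>{1..r}. crd j b \<ge> 0" using P_eq by auto
  have "b \<noteq> 0" using b P_subset zero_notin_Phi by auto
  then obtain j where j: "j \<in> {1..r}" "crd j b \<noteq> 0" using in_span_eq_0_iff in_span_Phi b P_subset by blast
  have "crd j b \<le> height b" unfolding height_def using nn j by (intro member_le_sum) auto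
  then show ?thesis using nn j by force
qed

lemma P_inner_simple_pos: "b \<in> P \<Longrightarrow> \<exists>i\<in>{1..r}. 0 < b \<bullet> alpha i"
proof (rule ccontr)
  assume b: "b \<in> P" and "\<not> (\<exists>i\<in>{1..r}. 0 < b \<bullet> alpha i)"
  then have le: "\<forall>i\<in>{1..r}. b \<bullet> alpha i \<le> 0" by auto
  have nn: "\<forall>j\<in>{1..r}. crd j b \<ge> 0" using b P_eq by auto
  have "b \<noteq> 0" using b P_subset zero_notin_Phi by auto
  have "b \<bullet> b = b \<bullet> (\<Sum>j=1..r. crd j b *\<^sub>R alpha j)"
    using scomb_coord[OF in_span_Phi] b P_subset unfolding scomb_def by auto
  also have "\<dots> = (\<Sum>j=1..r. crd j b * (b \<bullet> alpha j))" by (simp add: inner_sum_right)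
  also have "\<dots> \<le> 0" using le nn by (intro sum_nonpos) (simp add: mult_nonneg_nonpos)
  finally show False using \<open>b \<noteq> 0\<close> inner_gt_zero_iff[of b] by linarith
qed

lemma height_simple_refl_le:
  assumes b: "b \<in> P" and i: "i \<in> {1..r}" "0 < b \<bullet> alpha i"
  shows "height (refl (alpha i) b) \<le> height b - 1"
proof -
  have bP: "b \<in> Phi" and sp: "in_span b" using b P_subset in_span_Phi by auto
  define k where "k = (2 * (b \<bullet> alpha i)) / (alpha i \<bullet> alpha i)"
  \<comment> \<open>the drop of the i-th coordinate; it is an integer because all roots have integral coordinates\<close>
  have cb': "\<forall>j\<in>{1..r}. crd j (refl (alpha i) b) = crd j b - (if j = i then k else 0)"
    using coord_refl_alpha[OF sp i(1)] unfolding k_def by simp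
  have "k = crd i b - crd i (refl (alpha i) b)" using cb' i(1) by simp
  then have "k \<in> \<int>"
    using coord_Phi_Ints[OF bP i(1)] coord_Phi_Ints[OF refl_in_Phi[OF alpha_in_Phi[OF i(1)] bP] i(1)]
    by simp
  then obtain m :: int where m: "k = of_int m" by (elim Ints_cases)
  moreover have "k > 0" unfolding k_def using i alpha_neq_0 by (simp add: field_simps)
  ultimately have "k \<ge> 1" by simp
  have "height (refl (alpha i) b) = (\<Sum>j=1..r. crd j b - (if j = i then k else 0))"
    unfolding height_def by (rule sum.cong) (use cb' in auto)
  also have "\<dots> = height b - k" unfolding height_def using i(1) by (simp add: sum_subtractf)
  finally show ?thesis using \<open>k \<ge> 1\<close> by simp
qed

lemma P_in_W_orbit_of_simple:
  assumes "b \<in> P"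
  shows "\<exists>v\<in>W. \<exists>k\<in>{1..r}. b = v (alpha k)"
proof -
  obtain n where "height b \<le> real n" using real_arch_simple by blast
  then show ?thesis using assms
  proof (induction n arbitrary: b)
    case 0
    then show ?case using height_pos by fastforce
  next
    case (Suc n)
    show ?case
    proof (cases "\<exists>k\<in>{1..r}. b = alpha k")
      case True
      then show ?thesis using id_in_W by (metis id_apply)
    next
      case False
      obtain i where i: "i \<in> {1..r}" "0 < b \<bullet> alpha i" using P_inner_simple_pos[OF Suc.prems(2)] by blast
      have "refl (alpha i) b \<in> P" using simple_refl_P[OF i(1) Suc.prems(2)] False i(1) by blast
      moreover have "height (refl (alpha i) b) \<le> real n"
        using height_simple_refl_le[OF Suc.prems(2) i] Suc.prems(1) by simp
      ultimately obtain v k where vk: "v \<in> W" "k \<in> {1..r}" "refl (alpha i) b = v (alpha k)"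
        using Suc.IH by blast
      have "b = (refl (alpha i) \<circ> v) (alpha k)"
        using vk(3) refl_refl[OF alpha_neq_0[OF i(1)]] by (metis comp_apply)
      then show ?thesis using W_comp[OF simple_refl_in_W[OF i(1)] vk(1)] vk(2) by blast
    qed
  qed
qed

lemma refl_in_W: "b \<in> Phi \<Longrightarrow> refl b \<in> W"
proof -
  have posc: "refl b \<in> W" if b: "b \<in> P" for b
  proof -
    obtain v k where vk: "v \<in> W" "k \<in> {1..r}" "b = v (alpha k)" using P_in_W_orbit_of_simple[OF b] by blast
    have "refl b \<circ> v = v \<circ> refl (alpha k)" using refl_conj[OF orthogonal_transformation_W[OF vk(1)]] vk(3) by simp
    then have "refl b = v \<circ> refl (alpha k) \<circ> inv v"
      using W_apply_inv[OF vk(1)] by (auto simp: fun_eq_iff) metis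
    then show ?thesis using W_comp inv_in_W vk simple_refl_in_W by metis
  qed
  assume "b \<in> Phi"
  then show ?thesis using Phi_P_or_N posc N_iff_uminus_P refl_uminus by metis
qed

lemma weyl_group_subset_W: "w \<in> weyl_group Phi \<Longrightarrow> w \<in> W"
proof (induction rule: weyl_group.induct)
  case id_in show ?case by (rule id_in_W)
next
  case (refl_in a w) then show ?case using W_comp refl_in_W by blast
qed

subsection \<open>The sets R_I along a sorting process\<close>

definition fixes_coords :: "nat set \<Rightarrow> ('a \<Rightarrow> 'a) \<Rightarrow> bool" where
  "fixes_coords I y \<longleftrightarrow> y \<in> W \<and> (\<forall>g\<in>Phi. \<forall>i\<in>I. crd i (y g) = crd i g)"

lemma fixes_coords_inv: "fixes_coords I y \<Longrightarrow> fixes_coords I (inv y)"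
  unfolding fixes_coords_def
proof (intro conjI ballI)
  assume a: "y \<in> W \<and> (\<forall>g\<in>Phi. \<forall>i\<in>I. crd i (y g) = crd i g)"
  show "inv y \<in> W" using a inv_in_W by blast
  fix g i assume g: "g \<in> Phi" and i: "i \<in> I"
  have "inv y g \<in> Phi" using W_in_Phi[OF inv_in_W] a g by blast
  then have "crd i (y (inv y g)) = crd i (inv y g)" using a i by blast
  moreover have "y (inv y g) = g" using W_apply_inv[of y g] a by blast
  ultimately show "crd i (inv y g) = crd i g" by simp
qed

lemma fixes_coords_comp: "fixes_coords I y \<Longrightarrow> fixes_coords I z \<Longrightarrow> fixes_coords I (y \<circ> z)"
  unfolding fixes_coords_def using W_comp W_in_Phi by auto

lemma fixes_coords_refl:
  assumes I: "I \<subseteq> {1..r}" and b: "b \<in> Phi" and z: "\<forall>i\<in>I. crd i b = 0"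
  shows "fixes_coords I (refl b)"
  unfolding fixes_coords_def
proof (intro conjI ballI)
  show "refl b \<in> W" using refl_in_W[OF b] .
  fix g i assume g: "g \<in> Phi" and i: "i \<in> I"
  have i': "i \<in> {1..r}" using I i by blast
  have "crd i (refl b g) = crd i g - (2 * (g \<bullet> b) / (b \<bullet> b)) * crd i b"
    unfolding refl_def using coord_diff[OF in_span_Phi[OF g] in_span_scaleR[OF in_span_Phi[OF b]] i']
      coord_scaleR[OF in_span_Phi[OF b] i'] by simp
  then show "crd i (refl b g) = crd i g" using z i by simp
qed

lemma fixes_coords_simple_refl: "I \<subseteq> {1..r} \<Longrightarrow> j \<in> {1..r} - I \<Longrightarrow> fixes_coords I (refl (alpha j))"
  by (rule fixes_coords_refl) (auto simp: alpha_in_Phi coord_alpha)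

lemma fixes_coords_sprod: "I \<subseteq> {1..r} \<Longrightarrow> set ys \<subseteq> {1..r} - I \<Longrightarrow> fixes_coords I (sprod ys)"
proof (induction ys)
  case Nil then show ?case unfolding fixes_coords_def using id_in_W by simp
next
  case (Cons j ys)
  have e: "sprod (j # ys) = refl (alpha j) \<circ> sprod ys" by (rule sprod_Cons)
  show ?case unfolding e by (rule fixes_coords_comp[OF fixes_coords_simple_refl]) (use Cons in auto)
qed

definition meets :: "nat set \<Rightarrow> 'a \<Rightarrow> bool" where
  "meets I b \<longleftrightarrow> (\<exists>i\<in>I. i \<in> supp r alpha b)"

lemma R_set_eq: "R_set Phi r alpha I u = {b \<in> P \<inter> u ` N. meets I b}"
  unfolding R_set_def meets_def by simp

lemma meets_iff: "I \<subseteq> {1..r} \<Longrightarrow> meets I b \<longleftrightarrow> (\<exists>i\<in>I. crd i b \<noteq> 0)"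
  unfolding meets_def supp_def by blast

lemma fixes_coords_P_meets:
  assumes I: "I \<subseteq> {1..r}" and y: "fixes_coords I y" and b: "b \<in> P" and m: "meets I b"
  shows "y b \<in> P \<and> meets I (y b)"
proof -
  obtain i where i: "i \<in> I" "crd i b \<noteq> 0" using m meets_iff[OF I] by blast
  have bP: "b \<in> Phi" using b P_subset by blast
  have ci: "crd i (y b) = crd i b" using y bP i(1) unfolding fixes_coords_def by blast
  have "crd i b \<ge> 0" using b I i(1) unfolding P_eq by blast
  then have "crd i (y b) > 0" using ci i(2) by simp
  moreover have "y b \<in> Phi" using W_in_Phi y bP unfolding fixes_coords_def by blast
  ultimately have "y b \<in> P" using P_if_coord_pos I i(1) by blast
  moreover have "crd i (y b) \<noteq> 0" using ci i(2) by simp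
  then have "meets I (y b)" using meets_iff[OF I] i(1) by blast
  ultimately show ?thesis by blast
qed

lemma finite_R_set: "finite (R_set Phi r alpha I u)"
  by (rule finite_subset[OF _ finite_Phi]) (auto simp: R_set_eq dest: subsetD[OF P_subset])

lemma image_R_set_subset:
  assumes I: "I \<subseteq> {1..r}" and y: "fixes_coords I y" and u: "u \<in> W"
  shows "y ` R_set Phi r alpha I u \<subseteq> R_set Phi r alpha I (y \<circ> u)"
proof
  fix c assume "c \<in> y ` R_set Phi r alpha I u"
  then obtain b d where bd: "c = y b" "b \<in> P" "meets I b" "d \<in> N" "b = u d" unfolding R_set_eq by blast
  have "y b \<in> P \<and> meets I (y b)" by (rule fixes_coords_P_meets[OF I y bd(2,3)])
  moreover have "y b = (y \<circ> u) d" using bd(5) by simp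
  ultimately show "c \<in> R_set Phi r alpha I (y \<circ> u)" unfolding R_set_eq using bd(1,4) by blast
qed

lemma card_R_set_fixes_coords:
  assumes I: "I \<subseteq> {1..r}" and y: "fixes_coords I y" and u: "u \<in> W"
  shows "card (R_set Phi r alpha I (y \<circ> u)) = card (R_set Phi r alpha I u)"
proof -
  have yW: "y \<in> W" using y unfolding fixes_coords_def by blast
  have injy: "inj y" using bij_W[OF yW] bij_is_inj by blast
  have injiy: "inj (inv y)" using bij_W[OF inv_in_W[OF yW]] bij_is_inj by blast
  have yu: "y \<circ> u \<in> W" using W_comp[OF yW u] .
  have "card (R_set Phi r alpha I u) = card (y ` R_set Phi r alpha I u)"
    using card_image[OF inj_on_subset[OF injy]] by simp
  also have "\<dots> \<le> card (R_set Phi r alpha I (y \<circ> u))"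
    by (rule card_mono[OF finite_R_set image_R_set_subset[OF I y u]])
  finally have le1: "card (R_set Phi r alpha I u) \<le> card (R_set Phi r alpha I (y \<circ> u))" .
  have e: "inv y \<circ> (y \<circ> u) = u" using W_inv_apply[OF yW] by (simp add: fun_eq_iff)
  have "card (R_set Phi r alpha I (y \<circ> u)) = card (inv y ` R_set Phi r alpha I (y \<circ> u))"
    using card_image[OF inj_on_subset[OF injiy]] by simp
  also have "\<dots> \<le> card (R_set Phi r alpha I (inv y \<circ> (y \<circ> u)))"
    by (rule card_mono[OF finite_R_set image_R_set_subset[OF I fixes_coords_inv[OF y] yu]])
  finally show ?thesis using le1 e by simp
qed

lemma inversion_set_eq: "v \<in> W \<Longrightarrow> P \<inter> v ` N = inversions (inv v)"
proof
  assume v: "v \<in> W"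
  show "P \<inter> v ` N \<subseteq> inversions (inv v)"
  proof
    fix c assume "c \<in> P \<inter> v ` N"
    then obtain d where "c \<in> P" "d \<in> N" "c = v d" by blast
    then show "c \<in> inversions (inv v)" unfolding inversions_def using W_inv_apply[OF v] by simp
  qed
  show "inversions (inv v) \<subseteq> P \<inter> v ` N"
  proof
    fix c assume "c \<in> inversions (inv v)"
    then have c: "c \<in> P" "inv v c \<in> N" unfolding inversions_def by auto
    have "c = v (inv v c)" using W_apply_inv[OF v] by simp
    then show "c \<in> P \<inter> v ` N" using c by blast
  qed
qed

lemma card_inversion_set: "v \<in> W \<Longrightarrow> card (P \<inter> v ` N) = wlen r alpha v"
  using inversion_set_eq wlen_eq_card_inversions[OF inv_in_W] wlen_inv by simp

lemma inv_apply_N_if_wlen_less: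
  assumes u: "u \<in> W" and b: "b \<in> P" and d: "wlen r alpha (refl b \<circ> u) < wlen r alpha u"
  shows "inv u b \<in> N"
proof (rule ccontr)
  assume nn: "inv u b \<notin> N"
  have "inv u b \<in> Phi" using W_in_Phi[OF inv_in_W[OF u]] b P_subset by blast
  then have pos: "inv u b \<in> P" using nn Phi_P_or_N by blast
  have b0: "b \<noteq> 0" using b P_subset zero_notin_Phi by blast
  let ?v = "refl b \<circ> u"
  have v: "?v \<in> W" using W_comp[OF refl_in_W u] b P_subset by blast
  have "inv ?v b = - inv u b"
    using inv_refl_comp[OF b0 bij_W[OF u]] refl_self[OF b0] W_uminus[OF inv_in_W[OF u]] by simp
  then have "inv ?v b \<in> N" using pos N_iff_uminus_P by simp
  then have "wlen r alpha (refl b \<circ> ?v) < wlen r alpha ?v" by (rule wlen_refl_less[OF v b])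
  moreover have "refl b \<circ> ?v = u" using refl_refl[OF b0] by (simp add: fun_eq_iff)
  ultimately show False using d by simp
qed

lemma parabolic_coset_rep_exists:
  assumes I: "I \<subseteq> {1..r}" and u: "u \<in> W"
  shows "\<exists>ys. set ys \<subseteq> {1..r} - I \<and> (\<forall>j\<in>{1..r} - I. inv (sprod ys \<circ> u) (alpha j) \<in> P)"
proof -
  obtain ys where ys: "set ys \<subseteq> {1..r} - I"
    and mn: "\<forall>zs. set zs \<subseteq> {1..r} - I \<longrightarrow> wlen r alpha (sprod ys \<circ> u) \<le> wlen r alpha (sprod zs \<circ> u)"
    using ex_has_least_nat[of "\<lambda>ys. set ys \<subseteq> {1..r} - I" "[]" "\<lambda>ys. wlen r alpha (sprod ys \<circ> u)"] by auto
  have ysr: "set ys \<subseteq> {1..r}" using ys by blast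
  let ?x = "sprod ys \<circ> u"
  have x: "?x \<in> W" using W_comp[OF sprod_in_W[OF ysr] u] .
  have "inv ?x (alpha j) \<in> P" if j: "j \<in> {1..r} - I" for j
  proof (rule ccontr)
    assume np: "inv ?x (alpha j) \<notin> P"
    have jr: "j \<in> {1..r}" using j by blast
    have "inv ?x (alpha j) \<in> Phi" using W_in_Phi[OF inv_in_W[OF x] alpha_in_Phi[OF jr]] .
    then have nn: "inv ?x (alpha j) \<in> N" using np Phi_P_or_N by blast
    have ix: "inv ?x \<in> W" using inv_in_W[OF x] .
    have c1: "card (inversions (inv ?x \<circ> refl (alpha j))) = card (inversions (inv ?x)) - 1"
      using card_inversions_simple_refl(1)[OF ix jr] nn by simp
    have c2: "card (inversions (inv ?x)) \<ge> 1" using card_inversions_simple_refl(2)[OF ix jr nn] .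
    have "sprod (j # ys) \<circ> u = refl (alpha j) \<circ> ?x" by (simp add: sprod_Cons o_assoc)
    then have "inv (sprod (j # ys) \<circ> u) = inv ?x \<circ> refl (alpha j)" using inv_refl_comp[OF alpha_neq_0[OF jr] bij_W[OF x]] by simp
    moreover have "sprod (j # ys) \<circ> u \<in> W" using W_comp[OF sprod_in_W u] ysr jr by simp
    ultimately have "wlen r alpha (sprod (j # ys) \<circ> u) = card (inversions (inv ?x \<circ> refl (alpha j)))"
      using wlen_inv wlen_eq_card_inversions inv_in_W by metis
    moreover have "wlen r alpha ?x = card (inversions (inv ?x))" using wlen_inv[OF x] wlen_eq_card_inversions[OF ix] by simp
    moreover have "wlen r alpha ?x \<le> wlen r alpha (sprod (j # ys) \<circ> u)" using mn ys j by simp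
    ultimately show False using c1 c2 by linarith
  qed
  then show ?thesis using ys by blast
qed

lemma R_set_eq_inversion_set:
  assumes I: "I \<subseteq> {1..r}" and x: "x \<in> W" and h: "\<forall>j\<in>{1..r} - I. inv x (alpha j) \<in> P"
  shows "R_set Phi r alpha I x = P \<inter> x ` N"
proof
  show "R_set Phi r alpha I x \<subseteq> P \<inter> x ` N" unfolding R_set_eq by blast
  show "P \<inter> x ` N \<subseteq> R_set Phi r alpha I x"
  proof
    fix c assume c: "c \<in> P \<inter> x ` N"
    then obtain d where d: "c \<in> P" "d \<in> N" "c = x d" by blast
    have "meets I c"
    proof (rule ccontr)
      assume "\<not> meets I c"
      then have z: "\<forall>i\<in>I. crd i c = 0" using meets_iff[OF I] by blast
      have cP: "c \<in> Phi" using d(1) P_subset by blast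
      have nn: "\<forall>j\<in>{1..r}. crd j c \<ge> 0" using d(1) unfolding P_eq by blast
      have hh: "\<forall>j\<in>{1..r}. crd j c \<noteq> 0 \<longrightarrow> inv x (alpha j) \<in> P" using h z by blast
      have "\<forall>i\<in>{1..r}. crd i (inv x c) \<ge> 0"
        using coord_nonneg_apply[OF inv_in_W[OF x] in_span_Phi[OF cP] nn hh] by blast
      moreover have "inv x c \<in> Phi" using W_in_Phi[OF inv_in_W[OF x] cP] .
      ultimately have "inv x c \<in> P" unfolding P_eq by blast
      moreover have "inv x c = d" using d(3) W_inv_apply[OF x] by simp
      ultimately show False using d(2) P_not_N by blast
    qed
    then show "c \<in> R_set Phi r alpha I x" unfolding R_set_eq using c by blast
  qed
qed

lemma card_R_set_le_wlen: "u \<in> W \<Longrightarrow> card (R_set Phi r alpha I u) \<le> wlen r alpha u"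
proof -
  assume u: "u \<in> W"
  have "card (R_set Phi r alpha I u) \<le> card (P \<inter> u ` N)"
    by (rule card_mono) (auto simp: R_set_eq intro: finite_subset[OF _ finite_Phi] dest: subsetD[OF P_subset])
  then show ?thesis using card_inversion_set[OF u] by simp
qed

lemma card_R_set_refl_not_meets:
  assumes I: "I \<subseteq> {1..r}" and u: "u \<in> W" and b: "b \<in> Phi" and nm: "\<not> meets I b"
  shows "card (R_set Phi r alpha I (refl b \<circ> u)) = card (R_set Phi r alpha I u)"
proof -
  have "\<forall>i\<in>I. crd i b = 0" using nm meets_iff[OF I] by blast
  then show ?thesis using card_R_set_fixes_coords[OF I fixes_coords_refl[OF I b] u] by blast
qed

lemma card_R_set_refl_meets:
  assumes I: "I \<subseteq> {1..r}" and u: "u \<in> W" and b: "b \<in> P" and m: "meets I b"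
    and d: "wlen r alpha (refl b \<circ> u) < wlen r alpha u"
  shows "card (R_set Phi r alpha I (refl b \<circ> u)) < card (R_set Phi r alpha I u)"
proof -
  obtain ys where ys: "set ys \<subseteq> {1..r} - I" and h: "\<forall>j\<in>{1..r} - I. inv (sprod ys \<circ> u) (alpha j) \<in> P"
    using parabolic_coset_rep_exists[OF I u] by blast
  let ?y = "sprod ys" let ?x = "?y \<circ> u"
  have yp: "fixes_coords I ?y" using fixes_coords_sprod[OF I ys] .
  have yW: "?y \<in> W" using sprod_in_W ys by blast
  have x: "?x \<in> W" using W_comp[OF yW u] .
  have Rx: "card (R_set Phi r alpha I ?x) = wlen r alpha ?x"
    using R_set_eq_inversion_set[OF I x h] card_inversion_set[OF x] by simp
  have Ru: "card (R_set Phi r alpha I ?x) = card (R_set Phi r alpha I u)"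
    using card_R_set_fixes_coords[OF I yp u] .
  let ?b' = "?y b"
  have b'm: "?b' \<in> P \<and> meets I ?b'" using fixes_coords_P_meets[OF I yp b m] .
  have "inv ?x ?b' = inv u b"
    using o_inv_distrib[OF bij_W[OF yW] bij_W[OF u]] W_inv_apply[OF yW] by simp
  then have "inv ?x ?b' \<in> N" using inv_apply_N_if_wlen_less[OF u b d] by simp
  then have lt: "wlen r alpha (refl ?b' \<circ> ?x) < wlen r alpha ?x"
    using wlen_refl_less[OF x] b'm by blast
  have xs: "refl ?b' \<circ> ?x \<in> W" using W_comp[OF refl_in_W x] b'm P_subset by blast
  have "refl (inv ?y ?b') \<circ> inv ?y = inv ?y \<circ> refl ?b'"
    using refl_conj[OF orthogonal_transformation_W[OF inv_in_W[OF yW]]] .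
  then have "refl b \<circ> u = inv ?y \<circ> (refl ?b' \<circ> ?x)"
    using W_inv_apply[OF yW] by (auto simp: fun_eq_iff) metis
  then have "card (R_set Phi r alpha I (refl b \<circ> u)) = card (R_set Phi r alpha I (refl ?b' \<circ> ?x))"
    using card_R_set_fixes_coords[OF I fixes_coords_inv[OF yp] xs] by simp
  also have "\<dots> \<le> wlen r alpha (refl ?b' \<circ> ?x)" using card_R_set_le_wlen[OF xs] .
  finally show ?thesis using lt Rx Ru by simp
qed

lemma card_R_set_refl_step:
  assumes I: "I \<subseteq> {1..r}" and u: "u \<in> W" and b: "b \<in> P"
    and d: "wlen r alpha (refl b \<circ> u) < wlen r alpha u"
  shows "card (R_set Phi r alpha I (refl b \<circ> u)) + (if meets I b then 1 else 0) \<le> card (R_set Phi r alpha I u)"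
  using card_R_set_refl_meets[OF I u b _ d] card_R_set_refl_not_meets[OF I u] b P_subset
  by (cases "meets I b") (auto simp: Suc_le_eq)

lemma refl_prod_in_W: "set bs \<subseteq> Phi \<Longrightarrow> refl_prod bs \<in> W"
proof (induction bs)
  case Nil show ?case unfolding refl_prod_Nil by (rule id_in_W)
next
  case (Cons b bs)
  have e: "refl_prod (b # bs) = refl b \<circ> refl_prod bs" by (rule refl_prod_Cons)
  show ?case unfolding e by (rule W_comp) (use Cons refl_in_W in auto)
qed

lemma partial_w_in_W: "w \<in> W \<Longrightarrow> set bs \<subseteq> Phi \<Longrightarrow> partial_w bs w k \<in> W"
proof -
  assume w: "w \<in> W" and bs: "set bs \<subseteq> Phi"
  have "set (rev (take k bs)) \<subseteq> Phi" using bs set_take_subset by fastforce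
  then show ?thesis unfolding partial_w_def using W_comp[OF refl_prod_in_W w] by blast
qed

lemma card_steps_meeting_le_card_R_set:
  assumes w: "w \<in> W" and sp: "sorting_process Phi r alpha w bs" and I: "I \<subseteq> {1..r}"
  shows "card {k. k < length bs \<and> meets I (bs ! k)} \<le> card (R_set Phi r alpha I w)"
proof -
  have len: "\<forall>i\<le>length bs. wlen r alpha (partial_w bs w i) = length bs - i"
    and bsP: "set bs \<subseteq> P" using sp unfolding sorting_process_def by auto
  have bsPhi: "set bs \<subseteq> Phi" using bsP P_subset by blast
  have "m \<le> length bs \<Longrightarrow> card (R_set Phi r alpha I (partial_w bs w m)) + card {k. k < m \<and> meets I (bs ! k)}
         \<le> card (R_set Phi r alpha I w)" for m
  proof (induction m)
    case 0 then show ?case by (simp add: partial_w_0)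
  next
    case (Suc m)
    then have m: "m < length bs" by simp
    let ?u = "partial_w bs w m"
    have u: "?u \<in> W" using partial_w_in_W[OF w bsPhi] .
    have b: "bs ! m \<in> P" using bsP m by auto
    have ps: "partial_w bs w (Suc m) = refl (bs ! m) \<circ> ?u" using partial_w_Suc[OF m] .
    have "wlen r alpha (refl (bs ! m) \<circ> ?u) < wlen r alpha ?u"
      using len m ps by (metis Suc_leI diff_less_mono2 less_imp_le_nat lessI)
    then have nk: "card (R_set Phi r alpha I (refl (bs ! m) \<circ> ?u)) + (if meets I (bs ! m) then 1 else 0)
        \<le> card (R_set Phi r alpha I ?u)" using card_R_set_refl_step[OF I u b] by blast
    have fin: "finite {k. k < m \<and> meets I (bs ! k)}" by simp
    have cnt: "card {k. k < Suc m \<and> meets I (bs ! k)} = card {k. k < m \<and> meets I (bs ! k)} + (if meets I (bs ! m) then 1 else 0)"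
    proof (cases "meets I (bs ! m)")
      case True
      then have "{k. k < Suc m \<and> meets I (bs ! k)} = insert m {k. k < m \<and> meets I (bs ! k)}" by auto
      then show ?thesis using True fin by simp
    next
      case False
      then have "{k. k < Suc m \<and> meets I (bs ! k)} = {k. k < m \<and> meets I (bs ! k)}" using less_Suc_eq by auto
      then show ?thesis using False by simp
    qed
    have ih: "card (R_set Phi r alpha I ?u) + card {k. k < m \<and> meets I (bs ! k)} \<le> card (R_set Phi r alpha I w)"
      using Suc.IH m by simp
    show ?case unfolding ps using cnt nk ih by linarith
  qed
  from this[of "length bs"] show ?thesis by simp
qed

subsection \<open>Antireduced sorting processes and labelings\<close>

lemma simple_refl_N: "j \<in> {1..r} \<Longrightarrow> d \<in> N \<Longrightarrow> d \<noteq> - alpha j \<Longrightarrow> refl (alpha j) d \<in> N"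
proof -
  assume j: "j \<in> {1..r}" and d: "d \<in> N" "d \<noteq> - alpha j"
  have "- d \<in> P" using d(1) N_iff_uminus_P by simp
  moreover have "- d \<noteq> alpha j" using d(2) minus_equation_iff by metis
  ultimately have "refl (alpha j) (- d) \<in> P" using simple_refl_P[OF j] by blast
  moreover have "refl (alpha j) (- d) = - refl (alpha j) d"
    using linear_refl linear_neg by blast
  ultimately show ?thesis using N_iff_uminus_P by simp
qed

lemma simple_refl_N_iff:
  assumes j: "j \<in> {1..r}" and d: "d \<in> Phi" "d \<noteq> alpha j" "d \<noteq> - alpha j"
  shows "refl (alpha j) d \<in> N \<longleftrightarrow> d \<in> N"
  using simple_refl_P[OF j _ d(2)] simple_refl_N[OF j _ d(3)] Phi_P_or_N[OF d(1)] P_not_N by blast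

lemma inversion_set_comp_simple_refl:
  assumes v: "v \<in> W" and j: "j \<in> {1..r}" and vj: "v (alpha j) \<in> N"
  shows "P \<inter> (v \<circ> refl (alpha j)) ` N = (P \<inter> v ` N) - {- v (alpha j)}"
proof -
  let ?s = "refl (alpha j)"
  have mem: "c \<in> P \<inter> u ` N \<longleftrightarrow> c \<in> P \<and> inv u c \<in> N" if "u \<in> W" for u c
    using inversion_set_eq[OF that] unfolding inversions_def by blast
  have key: "inv v c \<in> N \<and> c \<noteq> - v (alpha j) \<longleftrightarrow> ?s (inv v c) \<in> N" if c: "c \<in> P" for c
  proof -
    define d where "d = inv v c"
    have d: "d \<in> Phi" "c = v d"
      using W_in_Phi[OF inv_in_W[OF v]] c P_subset W_apply_inv[OF v] unfolding d_def by auto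
    have "d \<noteq> alpha j" using c vj P_not_N d(2) by blast
    have "c = - v (alpha j) \<longleftrightarrow> d = - alpha j"
      using d(2) W_uminus[OF v] W_inv_apply[OF v] by metis
    moreover have "?s (- alpha j) = alpha j"
      using simple_refl_alpha[OF j] linear_neg[OF linear_refl] by (metis minus_minus)
    ultimately show ?thesis
      using simple_refl_N_iff[OF j d(1) \<open>d \<noteq> alpha j\<close>] alpha_in_P[OF j] P_not_N unfolding d_def by auto
  qed
  show ?thesis
  proof (rule set_eqI)
    fix c
    have "c \<in> P \<inter> (v \<circ> ?s) ` N \<longleftrightarrow> c \<in> P \<and> ?s (inv v c) \<in> N"
      by (simp only: mem[OF W_comp[OF v simple_refl_in_W[OF j]]]
          inv_comp_refl[OF alpha_neq_0[OF j] bij_W[OF v]] comp_apply)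
    moreover have "c \<in> (P \<inter> v ` N) - {- v (alpha j)} \<longleftrightarrow> c \<in> P \<and> inv v c \<in> N \<and> c \<noteq> - v (alpha j)"
      using mem[OF v] by blast
    ultimately show "c \<in> P \<inter> (v \<circ> ?s) ` N \<longleftrightarrow> c \<in> (P \<inter> v ` N) - {- v (alpha j)}"
      using key by blast
  qed
qed

lemma antireduced_sorting_process_exists:
  "v \<in> W \<Longrightarrow> \<exists>bs. sorting_process Phi r alpha v bs \<and> antireduced r alpha v bs \<and> distinct bs \<and>
      set bs = P \<inter> v ` N"
proof (induction "card (inversions v)" arbitrary: v)
  case 0
  then have "v = id" using inversions_empty_imp_id finite_inversions by simp
  moreover have "wlen r alpha v = 0" using wlen_eq_card_inversions[OF 0(2)] 0(1) by simp
  ultimately show ?case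
    using P_not_N by (intro exI[of _ "[]"])
      (auto simp: sorting_process_def antireduced_def refl_prod_Nil partial_w_0 id_def)
next
  case (Suc n v)
  have v: "v \<in> W" by fact
  then obtain j where j: "j \<in> {1..r}" "v (alpha j) \<in> N"
    using ex_simple_inversion Suc.hyps(2) by fastforce
  define b where "b = - v (alpha j)"
  have bP: "b \<in> P" and b0: "b \<noteq> 0"
    using j(2) P_subset zero_notin_Phi unfolding b_def by (auto simp: N_iff_uminus_P)
  have v': "refl b \<circ> v = v \<circ> refl (alpha j)"
    using refl_conj[OF orthogonal_transformation_W[OF v]] refl_uminus unfolding b_def by metis
  have v'W: "refl b \<circ> v \<in> W" using W_comp[OF v simple_refl_in_W[OF j(1)]] v' by simp
  have cn: "card (inversions (refl b \<circ> v)) = n"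
    using card_inversions_simple_refl(1)[OF v j(1)] j(2) Suc.hyps(2) v' by simp
  obtain bs where bs: "sorting_process Phi r alpha (refl b \<circ> v) bs"
    "antireduced r alpha (refl b \<circ> v) bs" "distinct bs" "set bs = P \<inter> (refl b \<circ> v) ` N"
    using Suc.hyps(1)[OF cn[symmetric] v'W] by blast
  have "wlen r alpha v = Suc (wlen r alpha (refl b \<circ> v))"
    using wlen_eq_card_inversions[OF v] wlen_eq_card_inversions[OF v'W] cn Suc.hyps(2) by simp
  then have "sorting_process Phi r alpha v (b # bs)" using sorting_process_Cons[OF bs(1) bP b0] by blast
  moreover have "inv v b = - alpha j" using W_inv_apply[OF v] W_uminus[OF v] unfolding b_def by metis
  then have "antireduced r alpha v (b # bs)" using antireduced_Cons[OF bs(2)] j(1) by simp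
  moreover have "- alpha j \<in> N" using alpha_in_P[OF j(1)] by (simp add: N_iff_uminus_P)
  then have "b \<in> P \<inter> v ` N" using bP W_uminus[OF v, of "alpha j"] unfolding b_def by force
  then have "set (b # bs) = P \<inter> v ` N" and "distinct (b # bs)"
    using bs(3,4) inversion_set_comp_simple_refl[OF v j] v' unfolding b_def by auto
  ultimately show ?case by blast
qed

lemma sum_label_mult_le_card_R_set:
  assumes w: "w \<in> W" and lsp: "labeled_sorting_process Phi r alpha w bs ls" and I: "I \<subseteq> {1..r}"
  shows "(\<Sum>i\<in>I. label_mult ls i) \<le> card (R_set Phi r alpha I w)"
proof -
  have sp: "sorting_process Phi r alpha w bs" and len: "length ls = length bs"
    and lab: "\<forall>k<length bs. ls ! k \<in> supp r alpha (bs ! k)"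
    using lsp unfolding labeled_sorting_process_def by auto
  have "(\<Sum>i\<in>I. label_mult ls i) = length (filter (\<lambda>x. x \<in> I) ls)"
    using sum_label_mult finite_subset[OF I] by simp
  also have "\<dots> = card {k. k < length ls \<and> ls ! k \<in> I}" by (rule length_filter_conv_card)
  also have "\<dots> \<le> card {k. k < length bs \<and> meets I (bs ! k)}"
    by (rule card_mono) (use lab len in \<open>auto simp: meets_def\<close>)
  also have "\<dots> \<le> card (R_set Phi r alpha I w)" using card_steps_meeting_le_card_R_set[OF w sp I] .
  finally show ?thesis .
qed

lemma labeled_antireduced_sorting_process_exists:
  assumes w: "w \<in> W" and tot: "(\<Sum>j=1..r. n j) = wlen r alpha w"
    and H: "\<forall>I\<subseteq>{1..r}. (\<Sum>i\<in>I. n i) \<le> card (R_set Phi r alpha I w)"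
  shows "\<exists>bs ls. labeled_sorting_process Phi r alpha w bs ls \<and>
           (\<forall>j\<in>{1..r}. label_mult ls j = n j) \<and> antireduced r alpha w bs"
proof -
  obtain bs where bs: "sorting_process Phi r alpha w bs" "antireduced r alpha w bs" "distinct bs"
    "set bs = P \<inter> w ` N" using antireduced_sorting_process_exists[OF w] by blast
  have "{s \<in> set bs. supp r alpha s \<inter> I \<noteq> {}} = R_set Phi r alpha I w" for I
    unfolding R_set_eq meets_def bs(4) by blast
  then have "hall_condition (set bs) {1..r} (supp r alpha) n"
    unfolding hall_condition_def using tot card_inversion_set[OF w] bs(4) H by (auto simp: supp_def)
  then obtain f where f: "\<forall>s\<in>set bs. f s \<in> supp r alpha s" "\<forall>i\<in>{1..r}. card {s\<in>set bs. f s = i} = n i"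
    using hall_multiplicities unfolding has_assignment_def by blast
  have "label_mult (map f bs) j = card {s\<in>set bs. f s = j}" for j
    using distinct_length_filter[OF bs(3), of "\<lambda>s. f s = j"]
    by (simp add: label_mult_def filter_map comp_def Int_def conj_commute)
  then show ?thesis using bs(1,2) f
    by (intro exI[of _ bs] exI[of _ "map f bs"]) (simp add: labeled_sorting_process_def)
qed

end

theorem mainTheorem13:
  fixes Phi :: "'a::euclidean_space set" and r :: nat and alpha :: "nat \<Rightarrow> 'a"
    and w :: "'a \<Rightarrow> 'a" and n :: "nat \<Rightarrow> nat"
  assumes "simply_laced_root_system Phi r alpha"
    and "w \<in> weyl_group Phi"
    and "(\<Sum>j=1..r. n j) = wlen r alpha w"
  shows "((\<exists>bs ls. labeled_sorting_process Phi r alpha w bs ls \<and>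
                   (\<forall>j\<in>{1..r}. label_mult ls j = n j))
          \<longleftrightarrow> (\<forall>I\<subseteq>{1..r}. (\<Sum>i\<in>I. n i) \<le> card (R_set Phi r alpha I w)))
       \<and> ((\<forall>I\<subseteq>{1..r}. (\<Sum>i\<in>I. n i) \<le> card (R_set Phi r alpha I w)) \<longrightarrow>
          (\<exists>bs ls. labeled_sorting_process Phi r alpha w bs ls \<and>
                   (\<forall>j\<in>{1..r}. label_mult ls j = n j) \<and>
                   antireduced r alpha w bs))"
proof -
  interpret simply_laced Phi r alpha by (rule simply_laced.intro[OF assms(1)])
  have w: "w \<in> W" using weyl_group_subset_W[OF assms(2)] .
  have "(\<Sum>i\<in>I. n i) \<le> card (R_set Phi r alpha I w)"
    if "labeled_sorting_process Phi r alpha w bs ls" "\<forall>j\<in>{1..r}. label_mult ls j = n j"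
      and "I \<subseteq> {1..r}" for bs ls I
    using sum_label_mult_le_card_R_set[OF w that(1,3)] that(2,3) by (simp add: subset_eq)
  then show ?thesis using labeled_antireduced_sorting_process_exists[OF w assms(3)] by blast
qed

end
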